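(* Let $K$ be a field, $n\ge 1$, and $A,B\in M_n(K)$. Consider the properties: $(\bot)$: $A$ has an eigen-covector $u$ and $B$ has an eigenvector $v$ with $uv=0$. $(\subset)$: $B$ has an eigenvector contained in an $(n-1)$-dimensional $A$-invariant subspace of $K^n$. $(\triangle)$: $n\ge 2$ and there is $P\in GL_n(K)$ with $P^{-1}AP=\begin{pmatrix}A'&*\\0&a\end{pmatrix}$ and $P^{-1}BP=\begin{pmatrix}b&*\\0&B'\end{pmatrix}$, where $a,b\in K$ and $A',B'\in M_{n-1}(K)$. $(<)$: $B$ has an eigenvector $v$ with $\dim K[A]v<n$. $(\top)$: $T(A,B)=0$. Then: (a) $(\bot)\Leftrightarrow(\subset)\Leftrightarrow(\triangle)\Rightarrow(<)\Rightarrow(\top)$. (b) If $K$ contains all eigenvalues of $A$, then $(\bot),(\subset),(\triangle),(<)$ are equivalent. (c) If $K$ contains all eigenvalues of $A$ and of $B$, then all five properties are equivalent.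
   Context: For a commutative ring $R$ with $1$ and $A,B\in M_n(R)$, $M(A,B)\in M_{n^2}(R)$ is the block matrix consisting of $n\times n$ blocks whose $(i,j)$-th block is $A^{j-1}B^{i-1}$ ($i,j=1,\dots,n$), and the (first) triangulant is $T(A,B)=\det M(A,B)$. Vectors are column vectors in $K^n$, covectors are row vectors. An eigenvector of $A$ is a nonzero column vector $v$ with $Av=\lambda v$ for some $\lambda\in K$; an eigen-covector of $A$ is a nonzero row vector $u$ with $uA=\lambda u$ for some $\lambda\in K$. A subspace $V\le K^n$ is $A$-invariant if $AV\subseteq V$. $K[A]$ denotes the unital subalgebra of $M_n(K)$ generated by $A$, so $K[A]v$ is the $A$-invariant subspace generated by $v$. *)

theory Defs
  imports "Jordan_Normal_Form.Jordan_Normal_Form" "Jordan_Normal_Form.VS_Connect"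
begin

text \<open>Matrices are JNF matrices of explicit dimension n. Covectors (row vectors) are
  1 x n matrices; vectors (column vectors) are JNF vectors of dimension n.\<close>

definition triangulant_mat :: "nat \<Rightarrow> 'a :: comm_ring_1 mat \<Rightarrow> 'a mat \<Rightarrow> 'a mat" where
  "triangulant_mat n A B = mat (n * n) (n * n)
     (\<lambda>(r, c). (A ^\<^sub>m (c div n) * B ^\<^sub>m (r div n)) $$ (r mod n, c mod n))"

definition triangulant :: "nat \<Rightarrow> 'a :: comm_ring_1 mat \<Rightarrow> 'a mat \<Rightarrow> 'a" where
  "triangulant n A B = det (triangulant_mat n A B)"

definition eigencovector :: "'a :: comm_ring_1 mat \<Rightarrow> 'a mat \<Rightarrow> 'a \<Rightarrow> bool" where
  "eigencovector A u k = (u \<in> carrier_mat 1 (dim_row A) \<and> u \<noteq> 0\<^sub>m 1 (dim_row A) \<and> u * A = k \<cdot>\<^sub>m u)"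

definition subspace_dim :: "nat \<Rightarrow> 'a :: field vec set \<Rightarrow> nat" where
  "subspace_dim n W = vectorspace.dim (class_ring :: 'a ring) ((module_vec TYPE('a) n)\<lparr>carrier := W\<rparr>)"

definition is_subspace :: "nat \<Rightarrow> 'a :: field vec set \<Rightarrow> bool" where
  "is_subspace n W = VectorSpace.subspace (class_ring :: 'a ring) W (module_vec TYPE('a) n)"

definition cyclic_subspace :: "nat \<Rightarrow> 'a :: field mat \<Rightarrow> 'a vec \<Rightarrow> 'a vec set" where
  "cyclic_subspace n A v = module.span (class_ring :: 'a ring) (module_vec TYPE('a) n)
      {(A ^\<^sub>m k) *\<^sub>v v | k. True}"

text \<open>K contains all eigenvalues of A: the characteristic polynomial splits into linear factors.\<close>
definition char_poly_splits :: "'a :: field mat \<Rightarrow> bool" where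
  "char_poly_splits A = (\<exists>as. char_poly A = (\<Prod>a\<leftarrow>as. [:- a, 1:]))"

definition prop_perp :: "nat \<Rightarrow> 'a :: field mat \<Rightarrow> 'a mat \<Rightarrow> bool" where
  "prop_perp n A B = (\<exists>u k v l. eigencovector A u k \<and> eigenvector B v l \<and> u *\<^sub>v v = 0\<^sub>v 1)"

definition prop_sub :: "nat \<Rightarrow> 'a :: field mat \<Rightarrow> 'a mat \<Rightarrow> bool" where
  "prop_sub n A B = (\<exists>W v l. is_subspace n W \<and> subspace_dim n W = n - 1
      \<and> (\<forall>w \<in> W. A *\<^sub>v w \<in> W) \<and> v \<in> W \<and> eigenvector B v l)"

definition prop_tri :: "nat \<Rightarrow> 'a :: field mat \<Rightarrow> 'a mat \<Rightarrow> bool" where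
  "prop_tri n A B = (n \<ge> 2 \<and> (\<exists>P Pinv A' B' X Y a b.
      P \<in> carrier_mat n n \<and> Pinv \<in> carrier_mat n n \<and> P * Pinv = 1\<^sub>m n \<and> Pinv * P = 1\<^sub>m n
      \<and> A' \<in> carrier_mat (n - 1) (n - 1) \<and> B' \<in> carrier_mat (n - 1) (n - 1)
      \<and> X \<in> carrier_mat (n - 1) 1 \<and> Y \<in> carrier_mat 1 (n - 1)
      \<and> Pinv * A * P = four_block_mat A' X (0\<^sub>m 1 (n - 1)) (mat 1 1 (\<lambda>_. a))
      \<and> Pinv * B * P = four_block_mat (mat 1 1 (\<lambda>_. b)) Y (0\<^sub>m (n - 1) 1) B'))"

definition prop_lt :: "nat \<Rightarrow> 'a :: field mat \<Rightarrow> 'a mat \<Rightarrow> bool" where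
  "prop_lt n A B = (\<exists>v l. eigenvector B v l \<and> subspace_dim n (cyclic_subspace n A v) < n)"

definition prop_top :: "nat \<Rightarrow> 'a :: field mat \<Rightarrow> 'a mat \<Rightarrow> bool" where
  "prop_top n A B = (triangulant n A B = 0)"

end

theory Submission
  imports Defs "Jordan_Normal_Form.DL_Rank" "Jordan_Normal_Form.Schur_Decomposition"
begin

text \<open>
  Eigen-covectors of A are handled as eigenvectors of A^T. If u is one and v is an eigenvector of B
  with u \<bullet> v = 0, the hyperplane orthogonal to u is A-invariant and contains v; conversely an
  A-invariant hyperplane is the orthogonal space of an eigen-covector, so (\<bottom>) and (\<subset>) agree.
  A basis starting with v whose dual basis ends with u brings A and B simultaneously into the block
  shapes of (\<triangle>). Since u \<bullet> A^i v = k^i (u \<bullet> v), the cyclic space K[A]v lies in that hyperplane,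
  giving (<). In general (<) says that the Krylov matrix (v, Av, ..., A^(n-1) v) is singular; for a
  relation c among its columns, c \<otimes> v lies in the kernel of M(A,B), so T(A,B) = 0.

  Conversely, the annihilator of K[A]v is invariant under A^T, so it contains an eigenvector of A^T
  when the characteristic polynomial of A splits. A kernel vector (y_j) of M(A,B) is a family with
  \<Sum>_j A^j B^i y_j = 0 for all i < n; applying the linear factors of a split characteristic
  polynomial of B turns it into such a relation among eigenvectors of B for one eigenvalue, from
  which either an eigenvector orthogonal to an eigen-covector of A or a singular Krylov matrix is
  extracted.
\<close>

section \<open>Subspaces of K^n, hyperplanes and annihilators\<close>

lemma (in vectorspace) subspace_fin_dim:
  assumes fd: fin_dim and W: "subspace K W V"
  shows "vectorspace.fin_dim K (vs W)"
proof -
  interpret W: vectorspace K "vs W" using subspace_is_vs[OF W] .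
  have sub: "submodule K W V" using W by (simp add: subspace_def)
  have li: "\<And>S. S \<subseteq> W \<Longrightarrow> W.lin_indpt S \<Longrightarrow> lin_indpt S"
    using span_li_not_depend(2)[OF _ sub] by auto
  have bound: "\<And>S. S \<subseteq> carrier (vs W) \<and> W.lin_indpt S \<Longrightarrow> finite S \<and> card S \<le> dim"
    using li li_le_dim[OF fd] sub by (fastforce simp: submodule_def)
  have empty: "{} \<subseteq> carrier (vs W) \<and> W.lin_indpt {}" unfolding W.lin_dep_def by auto
  obtain B where "finite B" "maximal B (\<lambda>S. S \<subseteq> carrier (vs W) \<and> W.lin_indpt S)"
    using maximal_exists[where P = "\<lambda>S. S \<subseteq> carrier (vs W) \<and> W.lin_indpt S", OF bound empty]
    by blast
  moreover then have "W.basis B" by (intro W.max_li_is_basis)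
  ultimately show ?thesis unfolding W.fin_dim_def W.basis_def by blast
qed

lemma (in vectorspace) subspace_full_dim:
  assumes fd: fin_dim and W: "subspace K W V" and d: "vectorspace.dim K (vs W) = dim"
  shows "W = carrier V"
proof -
  interpret W: vectorspace K "vs W" using subspace_is_vs[OF W] .
  have sub: "submodule K W V" using W by (simp add: subspace_def)
  have WC: "W \<subseteq> carrier V" using sub by (simp add: submodule_def)
  obtain B where B: "finite B" "W.basis B"
    using W.finite_basis_exists[OF subspace_fin_dim[OF fd W]] by blast
  have BW: "B \<subseteq> W" using B(2) unfolding W.basis_def by auto
  have "lin_indpt B" using B(2) span_li_not_depend(2)[OF BW sub] unfolding W.basis_def by auto
  moreover have "card B = dim" using W.dim_basis[OF B] d by simp
  ultimately have "basis B" using dim_li_is_basis[OF fd B(1)] BW WC by auto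
  hence "span B = carrier V" unfolding basis_def by auto
  with span_is_subset[OF BW sub] WC show ?thesis by auto
qed

lemma subspace_dim_le:
  fixes W :: "'a :: field vec set"
  assumes "is_subspace n W"
  shows "subspace_dim n W \<le> n"
proof -
  interpret vec_space "TYPE('a)" n .
  show ?thesis
    using assms subspace_dim[OF _ fin_dim subspace_fin_dim[OF fin_dim]] dim_is_n
    unfolding is_subspace_def subspace_dim_def by simp
qed

lemma subspace_dim_eq_n_imp_full:
  fixes W :: "'a :: field vec set"
  assumes "is_subspace n W" and "subspace_dim n W = n"
  shows "W = carrier_vec n"
proof -
  interpret vec_space "TYPE('a)" n .
  show ?thesis
    using assms subspace_full_dim[OF fin_dim] dim_is_n
    unfolding is_subspace_def subspace_dim_def by simp
qed

lemma subspace_eq_of_subset_dim_eq: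
  fixes X Y :: "'a :: field vec set"
  assumes X: "is_subspace n X" and Y: "is_subspace n Y" and XY: "X \<subseteq> Y"
    and d: "subspace_dim n X = subspace_dim n Y"
  shows "X = Y"
proof -
  interpret vec_space "TYPE('a)" n .
  have Y': "subspace class_ring Y (module_vec TYPE('a) n)" using Y unfolding is_subspace_def .
  interpret Y: vectorspace class_ring "vs Y" using subspace_is_vs[OF Y'] .
  have "subspace class_ring X (vs Y)"
    using nested_subspaces[OF Y'] X XY unfolding is_subspace_def by blast
  hence "X = carrier (vs Y)"
    using Y.subspace_full_dim[OF subspace_fin_dim[OF fin_dim Y']] d
    unfolding subspace_dim_def by simp
  thus ?thesis by simp
qed

definition hyperplane :: "nat \<Rightarrow> 'a :: field vec \<Rightarrow> 'a vec set" where
  "hyperplane n w = {x \<in> carrier_vec n. w \<bullet> x = 0}"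

lemma scalar_prod_linear_map:
  fixes w :: "'a :: field vec"
  assumes w: "w \<in> carrier_vec n"
  shows "linear_map class_ring (module_vec TYPE('a) n) (module_vec TYPE('a) 1)
           (\<lambda>x. vec 1 (\<lambda>_. w \<bullet> x))" (is "linear_map _ _ _ ?f")
proof -
  have "?f \<in> module_hom class_ring (module_vec TYPE('a) n) (module_vec TYPE('a) 1)"
    unfolding module_hom_def module_vec_simps class_ring_simps
    using w by (auto simp: scalar_prod_add_distrib scalar_prod_smult_distrib)
  thus ?thesis unfolding linear_map_def mod_hom_def mod_hom_axioms_def
    using vec_vs vec_module by metis
qed

lemma hyperplane_subspace:
  fixes w :: "'a :: field vec"
  assumes w: "w \<in> carrier_vec n"
  shows "is_subspace n (hyperplane n w)"
proof -
  interpret T: linear_map class_ring "module_vec TYPE('a) n" "module_vec TYPE('a) 1"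
    "\<lambda>x. vec 1 (\<lambda>_. w \<bullet> x)"
    using scalar_prod_linear_map[OF w] .
  have "T.kerT = hyperplane n w"
    unfolding mod_hom.ker_def[OF T.mod_hom_axioms] hyperplane_def module_vec_simps
    by (auto simp: vec_eq_iff)
  thus ?thesis using T.kerT_is_subspace unfolding is_subspace_def by simp
qed

lemma hyperplane_dim:
  fixes w :: "'a :: field vec"
  assumes w: "w \<in> carrier_vec n" and w0: "w \<noteq> 0\<^sub>v n"
  shows "subspace_dim n (hyperplane n w) = n - 1"
proof -
  interpret T: linear_map class_ring "module_vec TYPE('a) n" "module_vec TYPE('a) 1"
    "\<lambda>x. vec 1 (\<lambda>_. w \<bullet> x)"
    using scalar_prod_linear_map[OF w] .
  interpret V: vec_space "TYPE('a)" n .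
  interpret V1: vec_space "TYPE('a)" 1 .
  have ker: "T.kerT = hyperplane n w"
    unfolding mod_hom.ker_def[OF T.mod_hom_axioms] hyperplane_def module_vec_simps
    by (auto simp: vec_eq_iff)
  obtain i where i: "i < n" "w $ i \<noteq> 0" using w w0 by (metis eq_vecI carrier_vecD index_zero_vec)
  have "carrier_vec 1 \<subseteq> T.imT"
  proof
    fix y :: "'a vec" assume y: "y \<in> carrier_vec 1"
    let ?x = "(y $ 0 / w $ i) \<cdot>\<^sub>v unit_vec n i"
    have "w \<bullet> ?x = y $ 0" using i w by (simp add: scalar_prod_smult_distrib)
    hence "y = vec 1 (\<lambda>_. w \<bullet> ?x)" using y by (auto simp: vec_eq_iff)
    thus "y \<in> T.imT" unfolding mod_hom.im_def[OF T.mod_hom_axioms] module_vec_simps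
      by (intro image_eqI[where x = ?x]) auto
  qed
  hence "T.imT = carrier_vec 1" unfolding mod_hom.im_def[OF T.mod_hom_axioms] by auto
  hence "(module_vec TYPE('a) 1)\<lparr>carrier := T.imT\<rparr> = module_vec TYPE('a) 1"
    by (simp add: module_vec_def)
  with T.rank_nullity[OF V.fin_dim] V.dim_is_n V1.dim_is_n ker
  show ?thesis unfolding subspace_dim_def by simp
qed

lemma exists_orthogonal_vec:
  fixes bs :: "'a :: field vec list"
  assumes bs: "set bs \<subseteq> carrier_vec n" and len: "length bs < n"
  shows "\<exists>w \<in> carrier_vec n. w \<noteq> 0\<^sub>v n \<and> (\<forall>b \<in> set bs. w \<bullet> b = 0)"
proof -
  define c where "c i = (if i < length bs then bs ! i else 0\<^sub>v n)" for i
  define M where "M = mat\<^sub>r n n (\<lambda>i. if i = n - 1 then 0\<^sub>v n else c i)"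
  have M: "M \<in> carrier_mat n n" unfolding M_def by auto
  have "c \<in> {0..<n} \<rightarrow> carrier_vec n" unfolding c_def using bs nth_mem by fastforce
  \<comment> \<open>the rows of M are the vectors of bs, padded with zero rows; the last row is zero\<close>
  hence "det M = 0" unfolding M_def by (rule det_row_0[rotated], insert len, auto)
  then obtain w where w: "w \<in> carrier_vec n" "w \<noteq> 0\<^sub>v n" "M *\<^sub>v w = 0\<^sub>v n"
    using det_0_iff_vec_prod_zero[OF M] by auto
  have "w \<bullet> b = 0" if "b \<in> set bs" for b
  proof -
    obtain i where i: "i < length bs" "b = bs ! i" using \<open>b \<in> set bs\<close> by (auto simp: in_set_conv_nth)
    have b: "b \<in> carrier_vec n" using i bs nth_mem by blast
    have "row M i = b" unfolding M_def c_def using i len b by (subst row_mat_of_row_fun) auto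
    moreover have "(M *\<^sub>v w) $ i = 0" using w(3) i len by auto
    ultimately show "w \<bullet> b = 0" using i len M b w(1) comm_scalar_prod[OF b w(1)] by auto
  qed
  thus ?thesis using w by blast
qed

lemma proper_subspace_orthogonal_vec:
  fixes W :: "'a :: field vec set"
  assumes W: "is_subspace n W" and d: "subspace_dim n W < n"
  shows "\<exists>w \<in> carrier_vec n. w \<noteq> 0\<^sub>v n \<and> (\<forall>x \<in> W. w \<bullet> x = 0)"
proof -
  interpret V: vec_space "TYPE('a)" n .
  have sub: "subspace class_ring W (module_vec TYPE('a) n)" using W unfolding is_subspace_def .
  interpret WS: vectorspace class_ring "(module_vec TYPE('a) n)\<lparr>carrier := W\<rparr>"
    using V.subspace_is_vs[OF sub] .
  have subm: "submodule class_ring W (module_vec TYPE('a) n)" using sub by (simp add: subspace_def)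
  have WC: "W \<subseteq> carrier_vec n" using subm by (simp add: submodule_def module_vec_simps)
  obtain B where B: "finite B" "WS.basis B"
    using WS.finite_basis_exists[OF V.subspace_fin_dim[OF V.fin_dim sub]] by blast
  have BW: "B \<subseteq> W" using B(2) unfolding WS.basis_def by auto
  have spanB: "V.span B = W"
    using B(2) V.span_li_not_depend(1)[OF BW subm] unfolding WS.basis_def by auto
  obtain bs where bs: "set bs = B" "distinct bs" using finite_distinct_list[OF B(1)] by blast
  have "length bs < n"
    using distinct_card[OF bs(2)] bs(1) WS.dim_basis[OF B] d unfolding subspace_dim_def by simp
  then obtain w where w: "w \<in> carrier_vec n" "w \<noteq> 0\<^sub>v n" "\<forall>b \<in> B. w \<bullet> b = 0"
    using exists_orthogonal_vec[of bs n] bs(1) BW WC by blast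
  have "submodule class_ring (hyperplane n w) (module_vec TYPE('a) n)"
    using hyperplane_subspace[OF w(1)] unfolding is_subspace_def subspace_def by auto
  moreover have "B \<subseteq> hyperplane n w" using w(3) BW WC unfolding hyperplane_def by auto
  ultimately have "W \<subseteq> hyperplane n w" using V.span_is_subset spanB by metis
  thus ?thesis using w unfolding hyperplane_def by auto
qed

lemma span_dim_less_iff_orthogonal:
  fixes G :: "'a :: field vec set"
  assumes G: "G \<subseteq> carrier_vec n"
  shows "subspace_dim n (module.span class_ring (module_vec TYPE('a) n) G) < n
     \<longleftrightarrow> (\<exists>w \<in> carrier_vec n. w \<noteq> 0\<^sub>v n \<and> (\<forall>g \<in> G. w \<bullet> g = 0))"
proof -
  interpret V: vec_space "TYPE('a)" n .
  have S: "is_subspace n (V.span G)" unfolding is_subspace_def using V.span_is_subspace[OF G] by simp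
  show ?thesis
  proof
    assume "subspace_dim n (V.span G) < n"
    then obtain w where "w \<in> carrier_vec n" "w \<noteq> 0\<^sub>v n" "\<forall>x \<in> V.span G. w \<bullet> x = 0"
      using proper_subspace_orthogonal_vec[OF S] by blast
    thus "\<exists>w \<in> carrier_vec n. w \<noteq> 0\<^sub>v n \<and> (\<forall>g \<in> G. w \<bullet> g = 0)"
      using V.in_own_span[OF G] by blast
  next
    assume "\<exists>w \<in> carrier_vec n. w \<noteq> 0\<^sub>v n \<and> (\<forall>g \<in> G. w \<bullet> g = 0)"
    then obtain w where w: "w \<in> carrier_vec n" "w \<noteq> 0\<^sub>v n" "\<forall>g \<in> G. w \<bullet> g = 0" by blast
    have "submodule class_ring (hyperplane n w) (module_vec TYPE('a) n)"
      using hyperplane_subspace[OF w(1)] unfolding is_subspace_def subspace_def by auto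
    moreover have "G \<subseteq> hyperplane n w" unfolding hyperplane_def using G w(3) by auto
    ultimately have sp: "V.span G \<subseteq> hyperplane n w" using V.span_is_subset by blast
    obtain i where i: "i < n" "w $ i \<noteq> 0" using w by (metis eq_vecI carrier_vecD index_zero_vec)
    have "unit_vec n i \<notin> hyperplane n w" using i w unfolding hyperplane_def by simp
    hence "V.span G \<noteq> carrier_vec n" using sp by auto
    thus "subspace_dim n (V.span G) < n"
      using subspace_dim_le[OF S] subspace_dim_eq_n_imp_full[OF S] by fastforce
  qed
qed

lemma pow_mult_vec_carrier[simp]:
  "A \<in> carrier_mat n n \<Longrightarrow> v \<in> carrier_vec n \<Longrightarrow> A ^\<^sub>m k *\<^sub>v v \<in> carrier_vec n"
  using mult_mat_vec_carrier[OF pow_carrier_mat] by blast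

lemma pow_mat_Suc_left:
  fixes A :: "'a :: semiring_1 mat"
  assumes A: "A \<in> carrier_mat n n"
  shows "A ^\<^sub>m Suc i = A * A ^\<^sub>m i"
proof (induct i)
  case (Suc i)
  have "A ^\<^sub>m Suc (Suc i) = A * A ^\<^sub>m i * A" using Suc by simp
  also have "\<dots> = A * (A ^\<^sub>m i * A)" using assoc_mult_mat[OF A pow_carrier_mat[OF A] A] .
  finally show ?case by simp
qed (use A in simp)

lemma pow_mat_Suc_mult_vec:
  fixes A :: "'a :: semiring_1 mat"
  assumes A: "A \<in> carrier_mat n n" and v: "v \<in> carrier_vec n"
  shows "A ^\<^sub>m Suc i *\<^sub>v v = A *\<^sub>v (A ^\<^sub>m i *\<^sub>v v)"
  unfolding pow_mat_Suc_left[OF A] by (rule assoc_mult_mat_vec[OF A pow_carrier_mat[OF A] v])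

section \<open>The conditions (\<bottom>), (\<subset>) and (<) via orthogonality\<close>

definition krylov_perp :: "nat \<Rightarrow> 'a :: field mat \<Rightarrow> 'a mat \<Rightarrow> bool" where
  "krylov_perp n A B = (\<exists>v l. eigenvector B v l
     \<and> (\<exists>w \<in> carrier_vec n. w \<noteq> 0\<^sub>v n \<and> (\<forall>i. w \<bullet> (A ^\<^sub>m i *\<^sub>v v) = 0)))"

lemma prop_lt_iff_krylov_perp:
  fixes A B :: "'a :: field mat"
  assumes A: "A \<in> carrier_mat n n" and B: "B \<in> carrier_mat n n"
  shows "prop_lt n A B \<longleftrightarrow> krylov_perp n A B"
proof -
  have "subspace_dim n (cyclic_subspace n A v) < n
      \<longleftrightarrow> (\<exists>w \<in> carrier_vec n. w \<noteq> 0\<^sub>v n \<and> (\<forall>i. w \<bullet> (A ^\<^sub>m i *\<^sub>v v) = 0))"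
    if "v \<in> carrier_vec n" for v
  proof -
    have "{A ^\<^sub>m k *\<^sub>v v | k. True} \<subseteq> carrier_vec n" using A that by auto
    from span_dim_less_iff_orthogonal[OF this] show ?thesis
      unfolding cyclic_subspace_def by blast
  qed
  moreover have "eigenvector B v l \<Longrightarrow> v \<in> carrier_vec n" for v l
    using B unfolding eigenvector_def by auto
  ultimately show ?thesis unfolding prop_lt_def krylov_perp_def by blast
qed

definition eigen_perp :: "'a :: field mat \<Rightarrow> 'a mat \<Rightarrow> bool" where
  "eigen_perp A B = (\<exists>w k v l. eigenvector A\<^sup>T w k \<and> eigenvector B v l \<and> w \<bullet> v = 0)"

lemma eigencovector_iff_eigenvector_transpose:
  fixes A :: "'a :: field mat"
  assumes A: "A \<in> carrier_mat n n" and u: "u \<in> carrier_mat 1 n"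
  shows "eigencovector A u k \<longleftrightarrow> eigenvector A\<^sup>T (row u 0) k"
proof -
  have u_eq: "u = mat_of_row (row u 0)" using u by (auto intro!: eq_matI)
  have "u \<noteq> 0\<^sub>m 1 n \<longleftrightarrow> row u 0 \<noteq> 0\<^sub>v n"
    using u by (subst u_eq) (auto simp: mat_of_row_def mat_eq_iff vec_eq_iff)
  moreover have "u * A = k \<cdot>\<^sub>m u \<longleftrightarrow> A\<^sup>T *\<^sub>v row u 0 = k \<cdot>\<^sub>v row u 0"
  proof -
    have "(u * A) $$ (0, j) = (A\<^sup>T *\<^sub>v row u 0) $ j" if "j < n" for j
      using A u that comm_scalar_prod[of "col A j" n "row u 0"] by auto
    thus ?thesis using A u by (auto simp: mat_eq_iff vec_eq_iff)
  qed
  ultimately show ?thesis using A u unfolding eigencovector_def eigenvector_def by auto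
qed

lemma prop_perp_iff_eigen_perp:
  fixes A B :: "'a :: field mat"
  assumes A: "A \<in> carrier_mat n n"
  shows "prop_perp n A B \<longleftrightarrow> eigen_perp A B"
proof
  assume "prop_perp n A B"
  then obtain u k v l where u: "eigencovector A u k" and v: "eigenvector B v l"
    and uv: "u *\<^sub>v v = 0\<^sub>v 1" unfolding prop_perp_def by blast
  have uc: "u \<in> carrier_mat 1 n" using u A unfolding eigencovector_def by simp
  have "row u 0 \<bullet> v = 0" using uv uc by (auto simp: vec_eq_iff)
  with u v show "eigen_perp A B"
    unfolding eigen_perp_def eigencovector_iff_eigenvector_transpose[OF A uc] by blast
next
  assume "eigen_perp A B"
  then obtain w k v l where w: "eigenvector A\<^sup>T w k" and v: "eigenvector B v l"
    and wv: "w \<bullet> v = 0" unfolding eigen_perp_def by blast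
  have wc: "w \<in> carrier_vec n" using w A unfolding eigenvector_def by simp
  have uc: "mat_of_row w \<in> carrier_mat 1 n" using mat_of_row_carrier(1)[OF wc] .
  have "eigencovector A (mat_of_row w) k"
    using w unfolding eigencovector_iff_eigenvector_transpose[OF A uc] row_mat_of_row .
  moreover have "mat_of_row w *\<^sub>v v = 0\<^sub>v 1" using wv uc by (auto simp: vec_eq_iff)
  ultimately show "prop_perp n A B" unfolding prop_perp_def using v by blast
qed

lemma orthogonal_to_hyperplane_imp_multiple:
  fixes w y :: "'a :: field vec"
  assumes w: "w \<in> carrier_vec n" "w \<noteq> 0\<^sub>v n" and y: "y \<in> carrier_vec n"
    and orth: "\<forall>x \<in> hyperplane n w. y \<bullet> x = 0"
  shows "\<exists>k. y = k \<cdot>\<^sub>v w"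
proof -
  obtain i where i: "i < n" "w $ i \<noteq> 0" using w by (metis eq_vecI carrier_vecD index_zero_vec)
  have "y $ j = y $ i / w $ i * w $ j" if j: "j < n" for j
  proof -
    define x where "x = unit_vec n j - (w $ j / w $ i) \<cdot>\<^sub>v unit_vec n i"
    have "x \<in> hyperplane n w" unfolding x_def hyperplane_def using w i j
      by (simp add: scalar_prod_minus_distrib scalar_prod_smult_distrib)
    hence "y \<bullet> x = 0" using orth by blast
    moreover have "y \<bullet> x = y $ j - (w $ j / w $ i) * y $ i" unfolding x_def using y i j
      by (simp add: scalar_prod_minus_distrib scalar_prod_smult_distrib)
    ultimately show ?thesis by simp
  qed
  hence "y = (y $ i / w $ i) \<cdot>\<^sub>v w" using w y by (auto simp: vec_eq_iff)
  thus ?thesis by blast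
qed

lemma hyperplane_invariant_iff:
  fixes A :: "'a :: field mat"
  assumes A: "A \<in> carrier_mat n n" and w: "w \<in> carrier_vec n" "w \<noteq> 0\<^sub>v n"
  shows "(\<forall>x \<in> hyperplane n w. A *\<^sub>v x \<in> hyperplane n w) \<longleftrightarrow> (\<exists>k. A\<^sup>T *\<^sub>v w = k \<cdot>\<^sub>v w)"
proof
  assume inv: "\<forall>x \<in> hyperplane n w. A *\<^sub>v x \<in> hyperplane n w"
  have "\<forall>x \<in> hyperplane n w. (A\<^sup>T *\<^sub>v w) \<bullet> x = 0"
    using inv transpose_vec_mult_scalar[OF A _ w(1)] unfolding hyperplane_def by auto
  thus "\<exists>k. A\<^sup>T *\<^sub>v w = k \<cdot>\<^sub>v w"
    using orthogonal_to_hyperplane_imp_multiple[OF w] A w by simp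
next
  assume "\<exists>k. A\<^sup>T *\<^sub>v w = k \<cdot>\<^sub>v w"
  then obtain k where k: "A\<^sup>T *\<^sub>v w = k \<cdot>\<^sub>v w" by blast
  show "\<forall>x \<in> hyperplane n w. A *\<^sub>v x \<in> hyperplane n w"
  proof
    fix x assume "x \<in> hyperplane n w"
    hence x: "x \<in> carrier_vec n" "w \<bullet> x = 0" unfolding hyperplane_def by auto
    have "w \<bullet> (A *\<^sub>v x) = (k \<cdot>\<^sub>v w) \<bullet> x" using transpose_vec_mult_scalar[OF A x(1) w(1)] k by simp
    thus "A *\<^sub>v x \<in> hyperplane n w" unfolding hyperplane_def using A x w by simp
  qed
qed

lemma prop_sub_iff_eigen_perp:
  fixes A B :: "'a :: field mat"
  assumes A: "A \<in> carrier_mat n n" and B: "B \<in> carrier_mat n n" and n: "n \<ge> 1"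
  shows "prop_sub n A B \<longleftrightarrow> eigen_perp A B"
proof
  assume "prop_sub n A B"
  then obtain W v l where W: "is_subspace n W" "subspace_dim n W = n - 1"
    and inv: "\<forall>x \<in> W. A *\<^sub>v x \<in> W" and v: "v \<in> W" "eigenvector B v l"
    unfolding prop_sub_def by blast
  obtain w where w: "w \<in> carrier_vec n" "w \<noteq> 0\<^sub>v n" "\<forall>x \<in> W. w \<bullet> x = 0"
    using proper_subspace_orthogonal_vec[OF W(1)] W(2) n by auto
  have "W \<subseteq> carrier_vec n"
    using W(1) unfolding is_subspace_def subspace_def submodule_def by (auto simp: module_vec_simps)
  hence "W \<subseteq> hyperplane n w" using w(3) unfolding hyperplane_def by auto
  hence "W = hyperplane n w"
    using subspace_eq_of_subset_dim_eq[OF W(1) hyperplane_subspace[OF w(1)]] W(2) hyperplane_dim[OF w(1,2)]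
    by auto
  then obtain k where "A\<^sup>T *\<^sub>v w = k \<cdot>\<^sub>v w" using hyperplane_invariant_iff[OF A w(1,2)] inv by auto
  hence "eigenvector A\<^sup>T w k" unfolding eigenvector_def using A w by simp
  moreover have "w \<bullet> v = 0" using w(3) v(1) by simp
  ultimately show "eigen_perp A B" unfolding eigen_perp_def using v(2) by blast
next
  assume "eigen_perp A B"
  then obtain w k v l where w: "eigenvector A\<^sup>T w k" and v: "eigenvector B v l"
    and wv: "w \<bullet> v = 0" unfolding eigen_perp_def by blast
  have wc: "w \<in> carrier_vec n" "w \<noteq> 0\<^sub>v n" "A\<^sup>T *\<^sub>v w = k \<cdot>\<^sub>v w"
    using w A unfolding eigenvector_def by auto
  have "v \<in> hyperplane n w" unfolding hyperplane_def using v wv B by (auto simp: eigenvector_def)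
  thus "prop_sub n A B" unfolding prop_sub_def
    using hyperplane_subspace[OF wc(1)] hyperplane_dim[OF wc(1,2)]
      hyperplane_invariant_iff[OF A wc(1,2)] wc(3) v by blast
qed

lemma eigen_perp_dim:
  fixes A B :: "'a :: field mat"
  assumes A: "A \<in> carrier_mat n n" and B: "B \<in> carrier_mat n n" and n: "n \<ge> 1"
    and "eigen_perp A B"
  shows "n \<ge> 2"
proof (rule ccontr)
  assume "\<not> n \<ge> 2"
  hence n1: "n = 1" using n by simp
  obtain w k v l where "eigenvector A\<^sup>T w k" "eigenvector B v l" "w \<bullet> v = 0"
    using assms(4) unfolding eigen_perp_def by blast
  hence w: "w \<in> carrier_vec 1" "w \<noteq> 0\<^sub>v 1" and v: "v \<in> carrier_vec 1" "v \<noteq> 0\<^sub>v 1"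
    and "w $ 0 * v $ 0 = 0"
    using A B n1 by (auto simp: eigenvector_def scalar_prod_def)
  moreover have "x $ 0 \<noteq> 0" if "x \<in> carrier_vec 1" "x \<noteq> 0\<^sub>v 1" for x :: "'a vec"
    using that by (auto simp: vec_eq_iff)
  ultimately show False by simp
qed

lemma eigenvector_transpose_scalar_prod_pow:
  fixes A :: "'a :: comm_ring_1 mat"
  assumes A: "A \<in> carrier_mat n n" and w: "A\<^sup>T *\<^sub>v w = k \<cdot>\<^sub>v w" "w \<in> carrier_vec n"
    and x: "x \<in> carrier_vec n"
  shows "w \<bullet> (A ^\<^sub>m i *\<^sub>v x) = k ^ i * (w \<bullet> x)"
  using x
proof (induct i arbitrary: x)
  case (Suc i)
  have "A ^\<^sub>m Suc i *\<^sub>v x = A ^\<^sub>m i *\<^sub>v (A *\<^sub>v x)"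
    using assoc_mult_mat_vec[OF pow_carrier_mat[OF A] A Suc(2)] by simp
  moreover have "w \<bullet> (A *\<^sub>v x) = k * (w \<bullet> x)"
    using transpose_vec_mult_scalar[OF A Suc(2) w(2)] w Suc(2) by simp
  ultimately show ?case using Suc A by simp
qed (use A in simp)

lemma eigen_perp_imp_krylov_perp:
  fixes A B :: "'a :: field mat"
  assumes A: "A \<in> carrier_mat n n" and B: "B \<in> carrier_mat n n" and "eigen_perp A B"
  shows "krylov_perp n A B"
proof -
  obtain w k v l where w: "eigenvector A\<^sup>T w k" and v: "eigenvector B v l"
    and wv: "w \<bullet> v = 0" using assms(3) unfolding eigen_perp_def by blast
  have wc: "w \<in> carrier_vec n" "w \<noteq> 0\<^sub>v n" "A\<^sup>T *\<^sub>v w = k \<cdot>\<^sub>v w"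
    using w A unfolding eigenvector_def by auto
  have "v \<in> carrier_vec n" using v B unfolding eigenvector_def by auto
  hence "\<forall>i. w \<bullet> (A ^\<^sub>m i *\<^sub>v v) = 0"
    using eigenvector_transpose_scalar_prod_pow[OF A wc(3,1)] wv by simp
  thus ?thesis unfolding krylov_perp_def using v wc by blast
qed

section \<open>Conjugation and block shapes\<close>

lemma mult_unit_vec_eq_col:
  fixes A :: "'a :: semiring_1 mat"
  assumes A: "A \<in> carrier_mat nr nc" and j: "j < nc"
  shows "A *\<^sub>v unit_vec nc j = col A j"
  using A j by (auto simp: vec_eq_iff scalar_prod_right_unit)

lemma det_nonzero_imp_inverse:
  fixes A :: "'a :: field mat"
  assumes A: "A \<in> carrier_mat n n" and d: "det A \<noteq> 0"
  shows "\<exists>Ai. Ai \<in> carrier_mat n n \<and> A * Ai = 1\<^sub>m n \<and> Ai * A = 1\<^sub>m n"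
  using det_non_zero_imp_unit[OF A d, of undefined] unfolding Units_def ring_mat_simps by auto

lemma mult_inverse_pair:
  fixes P Pi Q Qi :: "'a :: semiring_1 mat"
  assumes "P \<in> carrier_mat n n" "Pi \<in> carrier_mat n n" "Q \<in> carrier_mat n n" "Qi \<in> carrier_mat n n"
    and "P * Pi = 1\<^sub>m n" "Q * Qi = 1\<^sub>m n"
  shows "(P * Q) * (Qi * Pi) = 1\<^sub>m n"
proof -
  have "(P * Q) * (Qi * Pi) = P * (Q * Qi) * Pi"
    using assms(1-4) by (simp add: assoc_mult_mat[of _ n n _ n _ n])
  thus ?thesis using assms by simp
qed

lemma exists_inverse_pair_first_col:
  fixes v :: "'a :: field vec"
  assumes v: "v \<in> carrier_vec n" and v0: "v \<noteq> 0\<^sub>v n"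
  shows "\<exists>Q Qi. Q \<in> carrier_mat n n \<and> Qi \<in> carrier_mat n n \<and> Q * Qi = 1\<^sub>m n \<and> Qi * Q = 1\<^sub>m n
     \<and> col Q 0 = v"
proof -
  interpret V: vec_space "TYPE('a)" n .
  define b where "b = basis_completion v"
  note bc = V.basis_completion[OF v v0, folded b_def]
  define Q where "Q = mat_of_cols n b"
  have Q: "Q \<in> carrier_mat n n" unfolding Q_def using bc by (metis mat_of_cols_carrier(1))
  have "V.rank Q = n" using V.lin_indpt_full_rank[OF Q] bc unfolding Q_def by simp
  hence "det Q \<noteq> 0" using V.det_rank_iff[OF Q] by simp
  then obtain Qi where Qi: "Qi \<in> carrier_mat n n" "Q * Qi = 1\<^sub>m n" "Qi * Q = 1\<^sub>m n"
    using det_nonzero_imp_inverse[OF Q] by blast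
  have n0: "n > 0" using v v0 by (cases n) auto
  hence "b ! 0 = v" using bc by (cases b) auto
  hence "col Q 0 = v" unfolding Q_def using bc n0 v by (subst col_mat_of_cols) auto
  thus ?thesis using Q Qi by blast
qed

lemma col_similar_eq_iff:
  fixes B P Pi :: "'a :: field mat"
  assumes B: "B \<in> carrier_mat n n" and P: "P \<in> carrier_mat n n" and Pi: "Pi \<in> carrier_mat n n"
    and PPi: "P * Pi = 1\<^sub>m n" and PiP: "Pi * P = 1\<^sub>m n" and j: "j < n"
  shows "col (Pi * B * P) j = b \<cdot>\<^sub>v unit_vec n j \<longleftrightarrow> B *\<^sub>v col P j = b \<cdot>\<^sub>v col P j"
proof -
  have Pj: "col P j \<in> carrier_vec n" using P j by simp
  have cancel: "Pi *\<^sub>v x = Pi *\<^sub>v y \<longleftrightarrow> x = y" if "x \<in> carrier_vec n" "y \<in> carrier_vec n" for x y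
  proof
    assume "Pi *\<^sub>v x = Pi *\<^sub>v y"
    hence "(P * Pi) *\<^sub>v x = (P * Pi) *\<^sub>v y"
      using assoc_mult_mat_vec[OF P Pi that(1)] assoc_mult_mat_vec[OF P Pi that(2)] by simp
    thus "x = y" using that unfolding PPi by simp
  qed simp
  have "col (Pi * B * P) j = (Pi * B) *\<^sub>v col P j" by (rule col_mult2[OF mult_carrier_mat[OF Pi B] P j])
  also have "\<dots> = Pi *\<^sub>v (B *\<^sub>v col P j)" by (rule assoc_mult_mat_vec[OF Pi B Pj])
  finally have lhs: "col (Pi * B * P) j = Pi *\<^sub>v (B *\<^sub>v col P j)" .
  have "Pi *\<^sub>v col P j = unit_vec n j" using col_mult2[OF Pi P j] j unfolding PiP by simp
  hence rhs: "b \<cdot>\<^sub>v unit_vec n j = Pi *\<^sub>v (b \<cdot>\<^sub>v col P j)" using mult_mat_vec[OF Pi Pj] by simp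
  have "B *\<^sub>v col P j \<in> carrier_vec n" "b \<cdot>\<^sub>v col P j \<in> carrier_vec n" using B Pj by auto
  from cancel[OF this] show ?thesis unfolding lhs rhs .
qed

lemma row_similar_eq_iff:
  fixes A P Pi :: "'a :: field mat"
  assumes A: "A \<in> carrier_mat n n" and P: "P \<in> carrier_mat n n" and Pi: "Pi \<in> carrier_mat n n"
    and PPi: "P * Pi = 1\<^sub>m n" and PiP: "Pi * P = 1\<^sub>m n" and i: "i < n"
  shows "row (Pi * A * P) i = a \<cdot>\<^sub>v unit_vec n i \<longleftrightarrow> A\<^sup>T *\<^sub>v row Pi i = a \<cdot>\<^sub>v row Pi i"
proof -
  have AT: "A\<^sup>T \<in> carrier_mat n n" and PT: "P\<^sup>T \<in> carrier_mat n n" and PiT: "Pi\<^sup>T \<in> carrier_mat n n"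
    using A P Pi by auto
  have "(Pi * A * P)\<^sup>T = P\<^sup>T * (Pi * A)\<^sup>T" by (rule transpose_mult[OF mult_carrier_mat[OF Pi A] P])
  also have "(Pi * A)\<^sup>T = A\<^sup>T * Pi\<^sup>T" by (rule transpose_mult[OF Pi A])
  also have "P\<^sup>T * (A\<^sup>T * Pi\<^sup>T) = P\<^sup>T * A\<^sup>T * Pi\<^sup>T" by (rule assoc_mult_mat[OF PT AT PiT, symmetric])
  finally have T: "(Pi * A * P)\<^sup>T = P\<^sup>T * A\<^sup>T * Pi\<^sup>T" .
  have PT_PiT: "P\<^sup>T * Pi\<^sup>T = 1\<^sub>m n" using transpose_mult[OF Pi P, symmetric] unfolding PiP by simp
  have PiT_PT: "Pi\<^sup>T * P\<^sup>T = 1\<^sub>m n" using transpose_mult[OF P Pi, symmetric] unfolding PPi by simp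
  have "col (P\<^sup>T * A\<^sup>T * Pi\<^sup>T) i = a \<cdot>\<^sub>v unit_vec n i
      \<longleftrightarrow> A\<^sup>T *\<^sub>v col Pi\<^sup>T i = a \<cdot>\<^sub>v col Pi\<^sup>T i"
    by (rule col_similar_eq_iff[OF AT PiT PT PiT_PT PT_PiT i])
  moreover have "row (Pi * A * P) i = col (P\<^sup>T * A\<^sup>T * Pi\<^sup>T) i"
    unfolding T[symmetric] using A P Pi i by simp
  moreover have "row Pi i = col Pi\<^sup>T i" using Pi i by simp
  ultimately show ?thesis by (simp only:)
qed

lemma four_block_first_col_iff:
  fixes D :: "'a :: field mat"
  assumes D: "D \<in> carrier_mat n n" and n: "n \<ge> 1"
  shows "(\<exists>Y D'. Y \<in> carrier_mat 1 (n - 1) \<and> D' \<in> carrier_mat (n - 1) (n - 1)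
            \<and> D = four_block_mat (mat 1 1 (\<lambda>_. b)) Y (0\<^sub>m (n - 1) 1) D')
     \<longleftrightarrow> col D 0 = b \<cdot>\<^sub>v unit_vec n 0"
proof
  assume "\<exists>Y D'. Y \<in> carrier_mat 1 (n - 1) \<and> D' \<in> carrier_mat (n - 1) (n - 1)
            \<and> D = four_block_mat (mat 1 1 (\<lambda>_. b)) Y (0\<^sub>m (n - 1) 1) D'"
  then obtain Y D' where Y: "Y \<in> carrier_mat 1 (n - 1)" and D': "D' \<in> carrier_mat (n - 1) (n - 1)"
    and D_eq: "D = four_block_mat (mat 1 1 (\<lambda>_. b)) Y (0\<^sub>m (n - 1) 1) D'" by blast
  show "col D 0 = b \<cdot>\<^sub>v unit_vec n 0"
  proof (rule eq_vecI)
    fix i assume "i < dim_vec (b \<cdot>\<^sub>v unit_vec n 0)"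
    hence i: "i < n" by simp
    have "col D 0 $ i = D $$ (i, 0)" using D i n by simp
    also have "\<dots> = (if i = 0 then b else 0)"
      unfolding D_eq using i n D' by (subst index_mat_four_block) auto
    finally show "col D 0 $ i = (b \<cdot>\<^sub>v unit_vec n 0) $ i" using i n by simp
  qed (use D in simp)
next
  assume c: "col D 0 = b \<cdot>\<^sub>v unit_vec n 0"
  have D0: "D $$ (i, 0) = (if i = 0 then b else 0)" if "i < n" for i
    using arg_cong[OF c, of "\<lambda>x. x $ i"] that D n by simp
  let ?Y = "mat 1 (n - 1) (\<lambda>(i, j). D $$ (i, j + 1))"
  let ?D' = "mat (n - 1) (n - 1) (\<lambda>(i, j). D $$ (i + 1, j + 1))"
  have "split_block D 1 1 = (mat 1 1 (\<lambda>_. b), ?Y, 0\<^sub>m (n - 1) 1, ?D')"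
    unfolding split_block_def Let_def using D D0 n by (auto intro!: eq_matI)
  from split_block(5)[OF this, of "n - 1" "n - 1"] D n
  have "D = four_block_mat (mat 1 1 (\<lambda>_. b)) ?Y (0\<^sub>m (n - 1) 1) ?D'" by simp
  moreover have "?Y \<in> carrier_mat 1 (n - 1)" "?D' \<in> carrier_mat (n - 1) (n - 1)" by auto
  ultimately show "\<exists>Y D'. Y \<in> carrier_mat 1 (n - 1) \<and> D' \<in> carrier_mat (n - 1) (n - 1)
            \<and> D = four_block_mat (mat 1 1 (\<lambda>_. b)) Y (0\<^sub>m (n - 1) 1) D'" by blast
qed

lemma four_block_last_row_iff:
  fixes C :: "'a :: field mat"
  assumes C: "C \<in> carrier_mat n n" and n: "n \<ge> 1"
  shows "(\<exists>C' X. C' \<in> carrier_mat (n - 1) (n - 1) \<and> X \<in> carrier_mat (n - 1) 1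
            \<and> C = four_block_mat C' X (0\<^sub>m 1 (n - 1)) (mat 1 1 (\<lambda>_. a)))
     \<longleftrightarrow> row C (n - 1) = a \<cdot>\<^sub>v unit_vec n (n - 1)"
proof
  assume "\<exists>C' X. C' \<in> carrier_mat (n - 1) (n - 1) \<and> X \<in> carrier_mat (n - 1) 1
            \<and> C = four_block_mat C' X (0\<^sub>m 1 (n - 1)) (mat 1 1 (\<lambda>_. a))"
  then obtain C' X where C': "C' \<in> carrier_mat (n - 1) (n - 1)" and X: "X \<in> carrier_mat (n - 1) 1"
    and C_eq: "C = four_block_mat C' X (0\<^sub>m 1 (n - 1)) (mat 1 1 (\<lambda>_. a))" by blast
  show "row C (n - 1) = a \<cdot>\<^sub>v unit_vec n (n - 1)"
  proof (rule eq_vecI)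
    fix j assume "j < dim_vec (a \<cdot>\<^sub>v unit_vec n (n - 1))"
    hence j: "j < n" by simp
    have "row C (n - 1) $ j = C $$ (n - 1, j)" using C j n by simp
    also have "\<dots> = (if j = n - 1 then a else 0)"
      unfolding C_eq using j n C' by (subst index_mat_four_block) auto
    finally show "row C (n - 1) $ j = (a \<cdot>\<^sub>v unit_vec n (n - 1)) $ j" using j n by simp
  qed (use C in simp)
next
  assume r: "row C (n - 1) = a \<cdot>\<^sub>v unit_vec n (n - 1)"
  have Cn: "C $$ (n - 1, j) = (if j = n - 1 then a else 0)" if "j < n" for j
    using arg_cong[OF r, of "\<lambda>x. x $ j"] that C n by simp
  let ?C' = "mat (n - 1) (n - 1) (\<lambda>ij. C $$ ij)"
  let ?X = "mat (n - 1) 1 (\<lambda>(i, j). C $$ (i, j + (n - 1)))"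
  have "split_block C (n - 1) (n - 1) = (?C', ?X, 0\<^sub>m 1 (n - 1), mat 1 1 (\<lambda>_. a))"
    unfolding split_block_def Let_def using C Cn n by (auto intro!: eq_matI)
  from split_block(5)[OF this, of 1 1] C n
  have "C = four_block_mat ?C' ?X (0\<^sub>m 1 (n - 1)) (mat 1 1 (\<lambda>_. a))" by simp
  moreover have "?C' \<in> carrier_mat (n - 1) (n - 1)" "?X \<in> carrier_mat (n - 1) 1" by auto
  ultimately show "\<exists>C' X. C' \<in> carrier_mat (n - 1) (n - 1) \<and> X \<in> carrier_mat (n - 1) 1
            \<and> C = four_block_mat C' X (0\<^sub>m 1 (n - 1)) (mat 1 1 (\<lambda>_. a))" by blast
qed

section \<open>Split characteristic polynomials\<close>

lemma vec_eq_of_minus_eq_zero: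
  fixes u v :: "'a :: ab_group_add vec"
  assumes "u \<in> carrier_vec n" "v \<in> carrier_vec n" "u - v = 0\<^sub>v n"
  shows "u = v"
  using assms by (auto simp: vec_eq_iff)

fun apply_factors :: "'a :: field mat \<Rightarrow> 'a list \<Rightarrow> 'a vec \<Rightarrow> 'a vec" where
  "apply_factors B [] x = x"
| "apply_factors B (b # bs) x = apply_factors B bs (B *\<^sub>v x - b \<cdot>\<^sub>v x)"

lemma apply_factors_carrier[simp]:
  "B \<in> carrier_mat n n \<Longrightarrow> x \<in> carrier_vec n \<Longrightarrow> apply_factors B bs x \<in> carrier_vec n"
  by (induct bs arbitrary: x) auto

lemma apply_factors_append:
  "apply_factors B (bs @ [b]) x = B *\<^sub>v apply_factors B bs x - b \<cdot>\<^sub>v apply_factors B bs x"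
  by (induct bs arbitrary: x) auto

lemma apply_factors_take_Suc:
  "m < length bs \<Longrightarrow> apply_factors B (take (Suc m) bs) x
     = B *\<^sub>v apply_factors B (take m bs) x - bs ! m \<cdot>\<^sub>v apply_factors B (take m bs) x"
  by (simp add: take_Suc_conv_app_nth apply_factors_append)

lemma apply_factors_similar:
  fixes B Q Qi :: "'a :: field mat"
  assumes B: "B \<in> carrier_mat n n" and Q: "Q \<in> carrier_mat n n" and Qi: "Qi \<in> carrier_mat n n"
    and QQi: "Q * Qi = 1\<^sub>m n" and x: "x \<in> carrier_vec n"
  shows "Qi *\<^sub>v apply_factors B bs x = apply_factors (Qi * B * Q) bs (Qi *\<^sub>v x)"
  using x
proof (induct bs arbitrary: x)
  case (Cons b bs)
  have QiB: "Qi * B = Qi * B * Q * Qi"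
  proof -
    have "Qi * B * Q * Qi = Qi * B * (Q * Qi)" using assoc_mult_mat[OF mult_carrier_mat[OF Qi B] Q Qi] .
    thus ?thesis using Qi B unfolding QQi by simp
  qed
  have "Qi *\<^sub>v (B *\<^sub>v x) = (Qi * B) *\<^sub>v x" using assoc_mult_mat_vec[OF Qi B Cons(2)] by simp
  also have "\<dots> = (Qi * B * Q) *\<^sub>v (Qi *\<^sub>v x)"
    by (subst QiB, rule assoc_mult_mat_vec[of _ n n, OF _ Qi Cons(2)]) (use B Q Qi in simp)
  finally have "Qi *\<^sub>v (B *\<^sub>v x) = (Qi * B * Q) *\<^sub>v (Qi *\<^sub>v x)" .
  moreover have "Qi *\<^sub>v (B *\<^sub>v x - b \<cdot>\<^sub>v x) = Qi *\<^sub>v (B *\<^sub>v x) - b \<cdot>\<^sub>v (Qi *\<^sub>v x)"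
    using Qi B Cons(2) by (simp add: mult_minus_distrib_mat_vec mult_mat_vec)
  moreover have "B *\<^sub>v x - b \<cdot>\<^sub>v x \<in> carrier_vec n" using B Cons(2) by simp
  ultimately show ?case using Cons(1) by simp
qed simp

lemma apply_factors_four_block_vec_last:
  fixes Y C' :: "'a :: field mat"
  assumes Y: "Y \<in> carrier_mat 1 m" and C': "C' \<in> carrier_mat m m" and y: "y \<in> carrier_vec (Suc m)"
  shows "vec_last (apply_factors (four_block_mat (mat 1 1 (\<lambda>_. a)) Y (0\<^sub>m m 1) C') bs y) m
       = apply_factors C' bs (vec_last y m)"
  using y
proof (induct bs arbitrary: y)
  case (Cons b bs)
  let ?C = "four_block_mat (mat 1 1 (\<lambda>_. a)) Y (0\<^sub>m m 1) C'"
  have C: "?C \<in> carrier_mat (Suc m) (Suc m)" using Y C' by auto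
  have y_split: "y = vec_first y 1 @\<^sub>v vec_last y m" using vec_first_last_append[of y 1 m] Cons(2) by simp
  have "?C *\<^sub>v y = (mat 1 1 (\<lambda>_. a) *\<^sub>v vec_first y 1 + Y *\<^sub>v vec_last y m)
      @\<^sub>v (0\<^sub>m m 1 *\<^sub>v vec_first y 1 + C' *\<^sub>v vec_last y m)"
    by (subst y_split, rule four_block_mat_mult_vec) (use Y C' in auto)
  hence "vec_last (?C *\<^sub>v y) m = C' *\<^sub>v vec_last y m"
    using C' by (auto simp: vec_eq_iff vec_last_def)
  hence "vec_last (?C *\<^sub>v y - b \<cdot>\<^sub>v y) m = C' *\<^sub>v vec_last y m - b \<cdot>\<^sub>v vec_last y m"
    using C Cons(2) by (auto simp: vec_eq_iff vec_last_def)
  moreover have "?C *\<^sub>v y - b \<cdot>\<^sub>v y \<in> carrier_vec (Suc m)" using C Cons(2) by simp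
  ultimately show ?case using Cons(1) by simp
qed simp

lemma four_block_first_col_annihilator:
  fixes Y C' :: "'a :: field mat"
  assumes Y: "Y \<in> carrier_mat 1 m" and C': "C' \<in> carrier_mat m m"
    and bs: "\<forall>y \<in> carrier_vec m. apply_factors C' bs y = 0\<^sub>v m" and x: "x \<in> carrier_vec (Suc m)"
  shows "apply_factors (four_block_mat (mat 1 1 (\<lambda>_. a)) Y (0\<^sub>m m 1) C') (bs @ [a]) x = 0\<^sub>v (Suc m)"
proof -
  let ?n = "Suc m"
  let ?C = "four_block_mat (mat 1 1 (\<lambda>_. a)) Y (0\<^sub>m m 1) C'"
  have C: "?C \<in> carrier_mat ?n ?n" using Y C' by auto
  have colC: "col ?C 0 = a \<cdot>\<^sub>v unit_vec ?n 0"
    using four_block_first_col_iff[OF C, of a] Y C' by auto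
  define z where "z = apply_factors ?C bs x"
  have z: "z \<in> carrier_vec ?n" unfolding z_def using C x by simp
  \<comment> \<open>the factors for the eigenvalues of C' kill all but the first coordinate\<close>
  have last: "vec_last z m = 0\<^sub>v m"
    unfolding z_def using apply_factors_four_block_vec_last[OF Y C' x] bs by simp
  have "z $ Suc k = 0" if "k < m" for k
    using arg_cong[OF last, of "\<lambda>u. u $ k"] z that by (simp add: vec_last_def)
  hence z_eq: "z = z $ 0 \<cdot>\<^sub>v unit_vec ?n 0"
    by (intro eq_vecI) (use z in \<open>auto simp: less_Suc_eq_0_disj\<close>)
  hence "?C *\<^sub>v z = z $ 0 \<cdot>\<^sub>v col ?C 0"
    using mult_mat_vec[OF C, of "unit_vec ?n 0" "z $ 0"] mult_unit_vec_eq_col[OF C] by simp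
  also have "\<dots> = (a * z $ 0) \<cdot>\<^sub>v unit_vec ?n 0"
    unfolding colC by (simp add: smult_smult_assoc mult.commute)
  also have "\<dots> = a \<cdot>\<^sub>v z" by (subst (2) z_eq) (simp add: smult_smult_assoc)
  finally have "?C *\<^sub>v z = a \<cdot>\<^sub>v z" .
  thus ?thesis unfolding apply_factors_append z_def[symmetric] using C z by simp
qed

lemma char_poly_four_block_first_col:
  fixes Y C' :: "'a :: field mat"
  assumes Y: "Y \<in> carrier_mat 1 m" and C': "C' \<in> carrier_mat m m"
  shows "char_poly (four_block_mat (mat 1 1 (\<lambda>_. a)) Y (0\<^sub>m m 1) C') = [:- a, 1:] * char_poly C'"
proof -
  have "char_poly (mat 1 1 (\<lambda>_. a)) = [:- a, 1:]" by (simp add: char_poly_defs det_def sign_def)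
  thus ?thesis using char_poly_four_block_zeros_col[OF _ Y C', of "mat 1 1 (\<lambda>_. a)"] by simp
qed

lemma similar_four_block_first_col:
  fixes B :: "'a :: field mat"
  assumes B: "B \<in> carrier_mat (Suc m) (Suc m)" and a: "eigenvalue B a"
  shows "\<exists>Q Qi Y C'. Q \<in> carrier_mat (Suc m) (Suc m) \<and> Qi \<in> carrier_mat (Suc m) (Suc m)
     \<and> Q * Qi = 1\<^sub>m (Suc m) \<and> Qi * Q = 1\<^sub>m (Suc m) \<and> Y \<in> carrier_mat 1 m \<and> C' \<in> carrier_mat m m
     \<and> Qi * B * Q = four_block_mat (mat 1 1 (\<lambda>_. a)) Y (0\<^sub>m m 1) C'"
proof -
  obtain v where "eigenvector B v a" using a unfolding eigenvalue_def by blast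
  hence v: "v \<in> carrier_vec (Suc m)" "v \<noteq> 0\<^sub>v (Suc m)" "B *\<^sub>v v = a \<cdot>\<^sub>v v"
    using B unfolding eigenvector_def by auto
  obtain Q Qi where Q: "Q \<in> carrier_mat (Suc m) (Suc m)" "Qi \<in> carrier_mat (Suc m) (Suc m)"
    "Q * Qi = 1\<^sub>m (Suc m)" "Qi * Q = 1\<^sub>m (Suc m)" "col Q 0 = v"
    using exists_inverse_pair_first_col[OF v(1,2)] by blast
  have "Qi * B * Q \<in> carrier_mat (Suc m) (Suc m)" using Q B by auto
  moreover have "col (Qi * B * Q) 0 = a \<cdot>\<^sub>v unit_vec (Suc m) 0"
    using col_similar_eq_iff[OF B Q(1-4), of 0 a] v Q(5) by simp
  ultimately show ?thesis using four_block_first_col_iff[of "Qi * B * Q" "Suc m" a] Q by auto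
qed

lemma split_char_poly_annihilator:
  fixes B :: "'a :: field mat"
  assumes "B \<in> carrier_mat n n" and "char_poly B = (\<Prod>a \<leftarrow> as. [:- a, 1:])"
  shows "\<exists>bs. length bs = n \<and> (\<forall>x \<in> carrier_vec n. apply_factors B bs x = 0\<^sub>v n)"
  using assms
proof (induct n arbitrary: B as)
  case (Suc m B as)
  let ?n = "Suc m"
  have B: "B \<in> carrier_mat ?n ?n" by fact
  have "degree (char_poly B) = ?n" using degree_monic_char_poly[OF B] by simp
  then obtain a as' where as: "as = a # as'" using Suc(3) by (cases as) auto
  have "poly (char_poly B) a = 0" unfolding Suc(3) as by simp
  hence "eigenvalue B a" using eigenvalue_root_char_poly[OF B] by simp
  then obtain Q Qi Y C' where Q: "Q \<in> carrier_mat ?n ?n" "Qi \<in> carrier_mat ?n ?n" "Q * Qi = 1\<^sub>m ?n"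
    "Qi * Q = 1\<^sub>m ?n" and Y: "Y \<in> carrier_mat 1 m" and C': "C' \<in> carrier_mat m m"
    and C_eq: "Qi * B * Q = four_block_mat (mat 1 1 (\<lambda>_. a)) Y (0\<^sub>m m 1) C'"
    using similar_four_block_first_col[OF B] by blast
  have "similar_mat_wit (Qi * B * Q) B Qi Q"
    by (rule similar_mat_witI[OF Q(4,3) refl _ B Q(2,1)]) (use Q B in auto)
  hence "char_poly (Qi * B * Q) = char_poly B" using char_poly_similar unfolding similar_mat_def by blast
  hence "[:- a, 1:] * char_poly C' = [:- a, 1:] * (\<Prod>a \<leftarrow> as'. [:- a, 1:])"
    unfolding C_eq char_poly_four_block_first_col[OF Y C'] Suc(3) as by simp
  hence "char_poly C' = (\<Prod>a \<leftarrow> as'. [:- a, 1:])"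
    using mult_cancel_left[of "[:- a, 1:]" "char_poly C'"] by (simp del: mult_pCons_left)
  then obtain bs' where bs': "length bs' = m" "\<forall>y \<in> carrier_vec m. apply_factors C' bs' y = 0\<^sub>v m"
    using Suc(1)[OF C'] by blast
  have "apply_factors B (bs' @ [a]) x = 0\<^sub>v ?n" if x: "x \<in> carrier_vec ?n" for x
  proof -
    have "Qi *\<^sub>v apply_factors B (bs' @ [a]) x = 0\<^sub>v ?n"
      using apply_factors_similar[OF B Q(1,2,3) x] four_block_first_col_annihilator[OF Y C' bs'(2)] Q(2) x
      unfolding C_eq by simp
    moreover have "apply_factors B (bs' @ [a]) x = Q *\<^sub>v (Qi *\<^sub>v apply_factors B (bs' @ [a]) x)"
      using assoc_mult_mat_vec[OF Q(1,2), of "apply_factors B (bs' @ [a]) x"] B x unfolding Q(3) by simp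
    moreover have "Q *\<^sub>v 0\<^sub>v ?n = 0\<^sub>v ?n" using Q(1) by (intro eq_vecI) auto
    ultimately show ?thesis by simp
  qed
  thus ?case using bs'(1) by (intro exI[of _ "bs' @ [a]"]) auto
qed (auto simp: vec_of_dim_0)

lemma eigenvector_in_stable_set:
  fixes A :: "'a :: field mat"
  assumes A: "A \<in> carrier_mat n n" and sp: "char_poly_splits A"
    and x0: "x0 \<in> carrier_vec n" "x0 \<noteq> 0\<^sub>v n" "S x0"
    and S: "\<And>x g. S x \<Longrightarrow> x \<in> carrier_vec n \<Longrightarrow> S (A *\<^sub>v x - g \<cdot>\<^sub>v x)"
  shows "\<exists>x g. S x \<and> eigenvector A x g"
proof -
  obtain bs where bs: "length bs = n" "\<forall>x \<in> carrier_vec n. apply_factors A bs x = 0\<^sub>v n"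
    using sp split_char_poly_annihilator[OF A] unfolding char_poly_splits_def by blast
  define f where "f m = apply_factors A (take m bs) x0" for m
  have f: "f m \<in> carrier_vec n" for m unfolding f_def using A x0 by simp
  have f_Suc: "f (Suc m) = A *\<^sub>v f m - bs ! m \<cdot>\<^sub>v f m" if "m < n" for m
    unfolding f_def using apply_factors_take_Suc[of m bs A x0] that bs(1) by simp
  have S_f: "S (f m)" if "m \<le> n" for m
    using that
  proof (induct m)
    case 0
    thus ?case using x0 unfolding f_def by simp
  next
    case (Suc m)
    thus ?case using S[OF _ f] f_Suc[of m] by simp
  qed
  have "f n = 0\<^sub>v n" "f 0 \<noteq> 0\<^sub>v n" unfolding f_def using bs x0 by simp_all
  then obtain m where m: "m < n" "f m \<noteq> 0\<^sub>v n" "f (Suc m) = 0\<^sub>v n"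
    using ex_least_nat_less[of "\<lambda>m. f m = 0\<^sub>v n" n] by blast
  have "A *\<^sub>v f m = bs ! m \<cdot>\<^sub>v f m"
    by (rule vec_eq_of_minus_eq_zero[of _ n]) (use f A f_Suc[OF m(1)] m(3) in auto)
  hence "eigenvector A (f m) (bs ! m)" unfolding eigenvector_def using A f m(2) by auto
  thus ?thesis using S_f[of m] m(1) by auto
qed

lemma char_poly_splits_transpose:
  "A \<in> carrier_mat n n \<Longrightarrow> char_poly_splits A\<^sup>T \<longleftrightarrow> char_poly_splits A"
  unfolding char_poly_splits_def by simp

lemma krylov_perp_imp_eigen_perp:
  fixes A B :: "'a :: field mat"
  assumes A: "A \<in> carrier_mat n n" and B: "B \<in> carrier_mat n n"
    and sp: "char_poly_splits A" and "krylov_perp n A B"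
  shows "eigen_perp A B"
proof -
  obtain v l w where v: "eigenvector B v l" and w: "w \<in> carrier_vec n" "w \<noteq> 0\<^sub>v n"
    "\<forall>i. w \<bullet> (A ^\<^sub>m i *\<^sub>v v) = 0" using assms(4) unfolding krylov_perp_def by blast
  have vc: "v \<in> carrier_vec n" using v B unfolding eigenvector_def by auto
  let ?S = "\<lambda>x. \<forall>i. x \<bullet> (A ^\<^sub>m i *\<^sub>v v) = 0"
  \<comment> \<open>the annihilator of the Krylov space of v is invariant under the transpose of A\<close>
  have stable: "?S (A\<^sup>T *\<^sub>v x - g \<cdot>\<^sub>v x)" if x: "?S x" "x \<in> carrier_vec n" for x g
  proof
    fix i
    have "(A\<^sup>T *\<^sub>v x) \<bullet> (A ^\<^sub>m i *\<^sub>v v) = x \<bullet> (A *\<^sub>v (A ^\<^sub>m i *\<^sub>v v))"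
      by (rule transpose_vec_mult_scalar[OF A _ x(2)]) (use A vc in simp)
    also have "\<dots> = x \<bullet> (A ^\<^sub>m Suc i *\<^sub>v v)" unfolding pow_mat_Suc_mult_vec[OF A vc] ..
    also have "\<dots> = 0" using x(1) by blast
    finally have "(A\<^sup>T *\<^sub>v x) \<bullet> (A ^\<^sub>m i *\<^sub>v v) = 0" .
    moreover have "(A\<^sup>T *\<^sub>v x - g \<cdot>\<^sub>v x) \<bullet> (A ^\<^sub>m i *\<^sub>v v)
        = (A\<^sup>T *\<^sub>v x) \<bullet> (A ^\<^sub>m i *\<^sub>v v) - g * (x \<bullet> (A ^\<^sub>m i *\<^sub>v v))"
      using x(2) A vc by (subst minus_scalar_prod_distrib[where n = n]) auto
    ultimately show "(A\<^sup>T *\<^sub>v x - g \<cdot>\<^sub>v x) \<bullet> (A ^\<^sub>m i *\<^sub>v v) = 0" using x(1) by simp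
  qed
  have AT: "A\<^sup>T \<in> carrier_mat n n" and spT: "char_poly_splits A\<^sup>T"
    using A sp char_poly_splits_transpose[OF A] by auto
  obtain x g where "?S x" "eigenvector A\<^sup>T x g"
    using eigenvector_in_stable_set[OF AT spT w(1,2), of ?S, OF w(3) stable] by blast
  moreover have "x \<bullet> v = 0" using \<open>?S x\<close>[rule_format, of 0] A vc by simp
  ultimately show ?thesis unfolding eigen_perp_def using v by blast
qed

lemma eigenvector_transpose_exists:
  fixes A :: "'a :: field mat"
  assumes A: "A \<in> carrier_mat n n" and n: "n \<ge> 1" and sp: "char_poly_splits A"
  shows "\<exists>u g. eigenvector A\<^sup>T u g"
proof -
  have AT: "A\<^sup>T \<in> carrier_mat n n" and spT: "char_poly_splits A\<^sup>T"
    using A sp char_poly_splits_transpose[OF A] by auto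
  have "unit_vec n 0 $ 0 \<noteq> (0\<^sub>v n :: 'a vec) $ 0" using n by simp
  hence "unit_vec n 0 \<noteq> (0\<^sub>v n :: 'a vec)" by metis
  from eigenvector_in_stable_set[OF AT spT unit_vec_carrier this, of "\<lambda>_. True"]
  show ?thesis by blast
qed

section \<open>Krylov matrices and the triangulant\<close>

definition krylov_mat :: "nat \<Rightarrow> 'a :: comm_ring_1 mat \<Rightarrow> 'a vec \<Rightarrow> 'a mat" where
  "krylov_mat n A v = mat n n (\<lambda>(r, j). (A ^\<^sub>m j *\<^sub>v v) $ r)"

lemma krylov_mat_dim[simp]: "dim_row (krylov_mat n A v) = n" "dim_col (krylov_mat n A v) = n"
  unfolding krylov_mat_def by simp_all

lemma krylov_mat_carrier[simp]: "krylov_mat n A v \<in> carrier_mat n n"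
  unfolding krylov_mat_def by simp

lemma krylov_mat_mult_vec:
  assumes "c \<in> carrier_vec n" and "r < n"
  shows "(krylov_mat n A v *\<^sub>v c) $ r = (\<Sum>j<n. c $ j * (A ^\<^sub>m j *\<^sub>v v) $ r)"
  using assms unfolding krylov_mat_def by (simp add: scalar_prod_def lessThan_atLeast0 mult.commute)

lemma krylov_perp_imp_singular:
  fixes A :: "'a :: field mat"
  assumes A: "A \<in> carrier_mat n n" and v: "v \<in> carrier_vec n"
    and w: "w \<in> carrier_vec n" "w \<noteq> 0\<^sub>v n" "\<forall>i. w \<bullet> (A ^\<^sub>m i *\<^sub>v v) = 0"
  shows "det (krylov_mat n A v) = 0"
proof -
  have K: "krylov_mat n A v \<in> carrier_mat n n" by simp
  have "(krylov_mat n A v)\<^sup>T *\<^sub>v w = 0\<^sub>v n"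
  proof (rule eq_vecI)
    fix j assume "j < dim_vec (0\<^sub>v n :: 'a vec)"
    hence j: "j < n" by simp
    have "col (krylov_mat n A v) j = A ^\<^sub>m j *\<^sub>v v"
      unfolding krylov_mat_def using j A v by (auto simp: vec_eq_iff)
    moreover have "((krylov_mat n A v)\<^sup>T *\<^sub>v w) $ j = col (krylov_mat n A v) j \<bullet> w"
      using j by simp
    ultimately have "((krylov_mat n A v)\<^sup>T *\<^sub>v w) $ j = (A ^\<^sub>m j *\<^sub>v v) \<bullet> w" by simp
    also have "\<dots> = 0" using comm_scalar_prod[of "A ^\<^sub>m j *\<^sub>v v" n w] w A v by simp
    finally show "((krylov_mat n A v)\<^sup>T *\<^sub>v w) $ j = 0\<^sub>v n $ j" using j by simp
  qed simp
  hence "det (krylov_mat n A v)\<^sup>T = 0" using det_0_iff_vec_prod_zero[of "(krylov_mat n A v)\<^sup>T" n] w by auto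
  thus ?thesis using det_transpose[OF K] by simp
qed

text \<open>If A^d v depends on the first d Krylov vectors, then the Krylov space is spanned by them, so
  orthogonality to the first d Krylov vectors propagates to all of them.\<close>

lemma krylov_orthogonal_prefix_propagates:
  fixes A :: "'a :: field mat"
  assumes A: "A \<in> carrier_mat n n" and v: "v \<in> carrier_vec n"
    and dep: "\<And>w. w \<in> carrier_vec n \<Longrightarrow> \<forall>j<d. w \<bullet> (A ^\<^sub>m j *\<^sub>v v) = 0 \<Longrightarrow> w \<bullet> (A ^\<^sub>m d *\<^sub>v v) = 0"
  shows "w \<in> carrier_vec n \<Longrightarrow> \<forall>j<d. w \<bullet> (A ^\<^sub>m j *\<^sub>v v) = 0 \<Longrightarrow> w \<bullet> (A ^\<^sub>m i *\<^sub>v v) = 0"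
proof (induct i arbitrary: w)
  case 0
  thus ?case using dep[of w] by (cases "d = 0") auto
next
  case (Suc i)
  have shift: "(A\<^sup>T *\<^sub>v w) \<bullet> (A ^\<^sub>m j *\<^sub>v v) = w \<bullet> (A ^\<^sub>m Suc j *\<^sub>v v)" for j
    using transpose_vec_mult_scalar[OF A _ Suc(2)] pow_mat_Suc_mult_vec[OF A v] A v by simp
  have "\<forall>j<d. (A\<^sup>T *\<^sub>v w) \<bullet> (A ^\<^sub>m j *\<^sub>v v) = 0"
  proof (intro allI impI)
    fix j assume j: "j < d"
    show "(A\<^sup>T *\<^sub>v w) \<bullet> (A ^\<^sub>m j *\<^sub>v v) = 0"
    proof (cases "Suc j = d")
      case True
      show ?thesis unfolding shift True using dep[OF Suc(2,3)] .
    next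
      case False
      hence "Suc j < d" using j by simp
      thus ?thesis unfolding shift using Suc(3) by blast
    qed
  qed
  hence "(A\<^sup>T *\<^sub>v w) \<bullet> (A ^\<^sub>m i *\<^sub>v v) = 0" using Suc(1)[of "A\<^sup>T *\<^sub>v w"] A Suc(2) by simp
  thus ?case unfolding shift .
qed

lemma singular_krylov_imp_orthogonal:
  fixes A :: "'a :: field mat"
  assumes A: "A \<in> carrier_mat n n" and v: "v \<in> carrier_vec n" and d: "det (krylov_mat n A v) = 0"
  shows "\<exists>w \<in> carrier_vec n. w \<noteq> 0\<^sub>v n \<and> (\<forall>i. w \<bullet> (A ^\<^sub>m i *\<^sub>v v) = 0)"
proof -
  obtain c where c: "c \<in> carrier_vec n" "c \<noteq> 0\<^sub>v n" "krylov_mat n A v *\<^sub>v c = 0\<^sub>v n"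
    using det_0_iff_vec_prod_zero[of "krylov_mat n A v" n] d by auto
  have rel: "(\<Sum>j<n. c $ j * (A ^\<^sub>m j *\<^sub>v v) $ r) = 0" if "r < n" for r
    using krylov_mat_mult_vec[OF c(1) that, of A v] c(3) that by simp
  define D where "D = {j. j < n \<and> c $ j \<noteq> 0}"
  define d where "d = Max D"
  have "finite D" "D \<noteq> {}" using c unfolding D_def by (auto simp: vec_eq_iff)
  hence "d \<in> D" "\<forall>j \<in> D. j \<le> d" unfolding d_def using Max_in Max_ge by auto
  hence dn: "d < n" and cd: "c $ d \<noteq> 0" and above: "\<And>j. d < j \<Longrightarrow> j < n \<Longrightarrow> c $ j = 0"
    unfolding D_def by force+
  have dep: "w \<bullet> (A ^\<^sub>m d *\<^sub>v v) = 0"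
    if w: "w \<in> carrier_vec n" and P: "\<forall>j<d. w \<bullet> (A ^\<^sub>m j *\<^sub>v v) = 0" for w
  proof -
    let ?f = "\<lambda>j. c $ j * (w \<bullet> (A ^\<^sub>m j *\<^sub>v v))"
    have "(\<Sum>j<n. ?f j) = (\<Sum>j<n. \<Sum>r<n. w $ r * ((A ^\<^sub>m j *\<^sub>v v) $ r * c $ j))"
      using w A v by (simp add: scalar_prod_def sum_distrib_left lessThan_atLeast0 ac_simps)
    also have "\<dots> = (\<Sum>r<n. \<Sum>j<n. w $ r * ((A ^\<^sub>m j *\<^sub>v v) $ r * c $ j))" by (rule sum.swap)
    also have "\<dots> = (\<Sum>r<n. w $ r * (\<Sum>j<n. c $ j * (A ^\<^sub>m j *\<^sub>v v) $ r))"
      by (simp add: sum_distrib_left ac_simps)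
    also have "\<dots> = 0" using rel by simp
    finally have "(\<Sum>j<n. ?f j) = 0" .
    moreover have "(\<Sum>j<n. ?f j) = (\<Sum>j \<in> {d}. ?f j)"
      by (rule sum.mono_neutral_right) (use dn P above in \<open>auto simp: nat_neq_iff\<close>)
    ultimately show ?thesis using cd by simp
  qed
  have "set (map (\<lambda>j. A ^\<^sub>m j *\<^sub>v v) [0..<d]) \<subseteq> carrier_vec n"
    "length (map (\<lambda>j. A ^\<^sub>m j *\<^sub>v v) [0..<d]) < n" using A v dn by auto
  from exists_orthogonal_vec[OF this] obtain w where
    w: "w \<in> carrier_vec n" "w \<noteq> 0\<^sub>v n" "\<forall>j<d. w \<bullet> (A ^\<^sub>m j *\<^sub>v v) = 0" by auto
  thus ?thesis using krylov_orthogonal_prefix_propagates[OF A v dep] by blast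
qed

lemma sum_lessThan_mult_div_mod:
  fixes f :: "nat \<Rightarrow> nat \<Rightarrow> 'a :: comm_monoid_add"
  shows "(\<Sum>t < m * n. f (t div n) (t mod n)) = (\<Sum>j<m. \<Sum>k<n. f j k)"
proof -
  have "(\<Sum>t < m * n. f (t div n) (t mod n)) = (\<Sum>j<m. \<Sum>t \<in> {j * n..<j * n + n}. f (t div n) (t mod n))"
    by (rule sum.nat_group[symmetric])
  also have "\<dots> = (\<Sum>j<m. \<Sum>k<n. f j k)"
  proof (rule sum.cong[OF refl])
    fix j
    have "{j * n..<j * n + n} = (\<lambda>k. j * n + k) ` {..<n}"
    proof (rule Set.set_eqI, rule iffI)
      fix x assume "x \<in> {j * n..<j * n + n}"
      hence "x = j * n + (x - j * n)" "x - j * n \<in> {..<n}" by auto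
      thus "x \<in> (\<lambda>k. j * n + k) ` {..<n}" by blast
    qed auto
    thus "(\<Sum>t \<in> {j * n..<j * n + n}. f (t div n) (t mod n)) = (\<Sum>k<n. f j k)"
      by (simp add: sum.reindex)
  qed
  finally show ?thesis .
qed

lemma pair_index_less:
  fixes j k n :: nat
  assumes "j < n" and "k < n"
  shows "j * n + k < n * n"
proof -
  have "j * n + k < Suc j * n" using assms(2) by simp
  also have "\<dots> \<le> n * n" using assms(1) by (intro mult_le_mono1) simp
  finally show ?thesis .
qed

section \<open>Kernel vectors of the triangulant matrix\<close>

definition mixed_power_sum :: "nat \<Rightarrow> 'a :: comm_ring_1 mat \<Rightarrow> 'a mat \<Rightarrow> (nat \<Rightarrow> 'a vec) \<Rightarrow> nat \<Rightarrow> nat \<Rightarrow> 'a"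
  where "mixed_power_sum n A B y i q = (\<Sum>j<n. ((A ^\<^sub>m j * B ^\<^sub>m i) *\<^sub>v y j) $ q)"

lemma mixed_power_sum_cong:
  "(\<And>j. j < n \<Longrightarrow> y j = z j) \<Longrightarrow> mixed_power_sum n A B y i q = mixed_power_sum n A B z i q"
  unfolding mixed_power_sum_def by simp

lemma triangulant_mat_mult_vec:
  fixes A B :: "'a :: comm_ring_1 mat"
  assumes A: "A \<in> carrier_mat n n" and B: "B \<in> carrier_mat n n" and x: "x \<in> carrier_vec (n * n)"
    and i: "i < n" and q: "q < n"
  shows "(triangulant_mat n A B *\<^sub>v x) $ (i * n + q)
       = mixed_power_sum n A B (\<lambda>j. vec n (\<lambda>k. x $ (j * n + k))) i q"
proof -
  have "(triangulant_mat n A B *\<^sub>v x) $ (i * n + q)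
      = (\<Sum>t < n * n. (A ^\<^sub>m (t div n) * B ^\<^sub>m i) $$ (q, t mod n) * x $ (t div n * n + t mod n))"
    using pair_index_less[OF i q] x q unfolding triangulant_mat_def by (simp add: scalar_prod_def lessThan_atLeast0)
  also have "\<dots> = (\<Sum>j<n. \<Sum>k<n. (A ^\<^sub>m j * B ^\<^sub>m i) $$ (q, k) * x $ (j * n + k))"
    by (rule sum_lessThan_mult_div_mod)
  also have "\<dots> = mixed_power_sum n A B (\<lambda>j. vec n (\<lambda>k. x $ (j * n + k))) i q"
    unfolding mixed_power_sum_def using A B q by (simp add: scalar_prod_def lessThan_atLeast0)
  finally show ?thesis .
qed

lemma mixed_power_sum_eigenvector_multiples:
  fixes A B :: "'a :: field mat"
  assumes A: "A \<in> carrier_mat n n" and B: "B \<in> carrier_mat n n" and v: "eigenvector B v l"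
    and c: "c \<in> carrier_vec n" and q: "q < n"
  shows "mixed_power_sum n A B (\<lambda>j. c $ j \<cdot>\<^sub>v v) i q = l ^ i * (krylov_mat n A v *\<^sub>v c) $ q"
proof -
  have vc: "v \<in> carrier_vec n" using v B unfolding eigenvector_def by auto
  have mult: "(A ^\<^sub>m j * B ^\<^sub>m i) *\<^sub>v (c $ j \<cdot>\<^sub>v v) = (c $ j * l ^ i) \<cdot>\<^sub>v (A ^\<^sub>m j *\<^sub>v v)" for j
  proof -
    have AB: "A ^\<^sub>m j * B ^\<^sub>m i \<in> carrier_mat n n"
      using mult_carrier_mat[OF pow_carrier_mat[OF A] pow_carrier_mat[OF B]] .
    have "(A ^\<^sub>m j * B ^\<^sub>m i) *\<^sub>v v = A ^\<^sub>m j *\<^sub>v (l ^ i \<cdot>\<^sub>v v)"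
      using assoc_mult_mat_vec[OF pow_carrier_mat[OF A] pow_carrier_mat[OF B] vc]
        eigenvector_pow[OF B v] by simp
    also have "\<dots> = l ^ i \<cdot>\<^sub>v (A ^\<^sub>m j *\<^sub>v v)" by (rule mult_mat_vec[OF pow_carrier_mat[OF A] vc])
    finally show ?thesis using mult_mat_vec[OF AB vc] by (simp add: smult_smult_assoc)
  qed
  have "mixed_power_sum n A B (\<lambda>j. c $ j \<cdot>\<^sub>v v) i q = (\<Sum>j<n. (c $ j * l ^ i) * (A ^\<^sub>m j *\<^sub>v v) $ q)"
    unfolding mixed_power_sum_def by (rule sum.cong) (use A vc q in \<open>simp_all add: mult\<close>)
  also have "\<dots> = l ^ i * (\<Sum>j<n. c $ j * (A ^\<^sub>m j *\<^sub>v v) $ q)"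
    by (simp add: sum_distrib_left ac_simps)
  finally show ?thesis using krylov_mat_mult_vec[OF c q] by simp
qed

lemma singular_krylov_imp_triangulant_zero:
  fixes A B :: "'a :: field mat"
  assumes A: "A \<in> carrier_mat n n" and B: "B \<in> carrier_mat n n"
    and v: "eigenvector B v l" and d: "det (krylov_mat n A v) = 0"
  shows "triangulant n A B = 0"
proof -
  have vc: "v \<in> carrier_vec n" "v \<noteq> 0\<^sub>v n" using v B unfolding eigenvector_def by auto
  obtain c where c: "c \<in> carrier_vec n" "c \<noteq> 0\<^sub>v n" "krylov_mat n A v *\<^sub>v c = 0\<^sub>v n"
    using det_0_iff_vec_prod_zero[of "krylov_mat n A v" n] d by auto
  \<comment> \<open>the tensor c \<otimes> v is a kernel vector of the triangulant matrix\<close>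
  define x where "x = vec (n * n) (\<lambda>t. c $ (t div n) * v $ (t mod n))"
  have x: "x \<in> carrier_vec (n * n)" unfolding x_def by simp
  obtain j0 k0 where j0: "j0 < n" "c $ j0 \<noteq> 0" and k0: "k0 < n" "v $ k0 \<noteq> 0"
    using c vc by (auto simp: vec_eq_iff)
  hence "x $ (j0 * n + k0) \<noteq> 0" using pair_index_less[OF j0(1) k0(1)] unfolding x_def by simp
  hence "x \<noteq> 0\<^sub>v (n * n)" using pair_index_less[OF j0(1) k0(1)] by auto
  moreover have "triangulant_mat n A B *\<^sub>v x = 0\<^sub>v (n * n)"
  proof (rule eq_vecI)
    fix r assume "r < dim_vec (0\<^sub>v (n * n) :: 'a vec)"
    hence r: "r < n * n" by simp
    hence n0: "n > 0" by (cases n) auto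
    define i q where "i = r div n" and "q = r mod n"
    have iq: "i < n" "q < n" "r = i * n + q"
      unfolding i_def q_def using r n0 by (auto simp: less_mult_imp_div_less)
    have blocks: "vec n (\<lambda>k. x $ (j * n + k)) = c $ j \<cdot>\<^sub>v v" if "j < n" for j
      using pair_index_less[OF that] vc n0 unfolding x_def by (auto simp: vec_eq_iff)
    have "(triangulant_mat n A B *\<^sub>v x) $ r = mixed_power_sum n A B (\<lambda>j. c $ j \<cdot>\<^sub>v v) i q"
      unfolding iq(3) triangulant_mat_mult_vec[OF A B x iq(1,2)] by (rule mixed_power_sum_cong) (rule blocks)
    also have "\<dots> = l ^ i * (krylov_mat n A v *\<^sub>v c) $ q"
      by (rule mixed_power_sum_eigenvector_multiples[OF A B v c(1) iq(2)])
    finally have "(triangulant_mat n A B *\<^sub>v x) $ r = l ^ i * (krylov_mat n A v *\<^sub>v c) $ q" .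
    thus "(triangulant_mat n A B *\<^sub>v x) $ r = 0\<^sub>v (n * n) $ r" using c(3) iq r by simp
  qed (simp add: triangulant_mat_def)
  ultimately show ?thesis
    using det_0_iff_vec_prod_zero[of "triangulant_mat n A B" "n * n"] x
    unfolding triangulant_def triangulant_mat_def by auto
qed

lemma triangulant_zero_imp_family:
  fixes A B :: "'a :: field mat"
  assumes A: "A \<in> carrier_mat n n" and B: "B \<in> carrier_mat n n" and T: "triangulant n A B = 0"
  shows "\<exists>y. (\<forall>j<n. y j \<in> carrier_vec n) \<and> (\<exists>j<n. y j \<noteq> 0\<^sub>v n)
           \<and> (\<forall>i<n. \<forall>q<n. mixed_power_sum n A B y i q = 0)"
proof -
  have M: "triangulant_mat n A B \<in> carrier_mat (n * n) (n * n)" unfolding triangulant_mat_def by simp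
  obtain x where x: "x \<in> carrier_vec (n * n)" "x \<noteq> 0\<^sub>v (n * n)" "triangulant_mat n A B *\<^sub>v x = 0\<^sub>v (n * n)"
    using det_0_iff_vec_prod_zero[OF M] T unfolding triangulant_def by blast
  define y where "y j = vec n (\<lambda>k. x $ (j * n + k))" for j
  obtain t where t: "t < n * n" "x $ t \<noteq> 0" using x by (auto simp: vec_eq_iff)
  have "0 < n" using t(1) by (cases n) auto
  hence "t div n < n" "t mod n < n" "y (t div n) $ (t mod n) = x $ t"
    using t unfolding y_def by (auto simp: less_mult_imp_div_less)
  hence "\<exists>j<n. y j \<noteq> 0\<^sub>v n" using t(2) by (metis index_zero_vec(1))
  moreover have "\<forall>i<n. \<forall>q<n. mixed_power_sum n A B y i q = 0"
    using triangulant_mat_mult_vec[OF A B x(1)] x(3) pair_index_less unfolding y_def by simp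
  moreover have "\<forall>j<n. y j \<in> carrier_vec n" unfolding y_def by simp
  ultimately show ?thesis by blast
qed

lemma mixed_power_sum_step:
  fixes A B :: "'a :: field mat"
  assumes A: "A \<in> carrier_mat n n" and B: "B \<in> carrier_mat n n"
    and y: "\<And>j. j < n \<Longrightarrow> y j \<in> carrier_vec n" and q: "q < n"
  shows "mixed_power_sum n A B (\<lambda>j. B *\<^sub>v y j - b \<cdot>\<^sub>v y j) i q
       = mixed_power_sum n A B y (Suc i) q - b * mixed_power_sum n A B y i q"
proof -
  have "((A ^\<^sub>m j * B ^\<^sub>m i) *\<^sub>v (B *\<^sub>v y j - b \<cdot>\<^sub>v y j)) $ q
      = ((A ^\<^sub>m j * B ^\<^sub>m Suc i) *\<^sub>v y j) $ q - b * ((A ^\<^sub>m j * B ^\<^sub>m i) *\<^sub>v y j) $ q"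
    if j: "j < n" for j
  proof -
    have yj: "y j \<in> carrier_vec n" using y j .
    have AB: "A ^\<^sub>m j * B ^\<^sub>m i \<in> carrier_mat n n"
      using mult_carrier_mat[OF pow_carrier_mat[OF A] pow_carrier_mat[OF B]] .
    have "(A ^\<^sub>m j * B ^\<^sub>m i) *\<^sub>v (B *\<^sub>v y j - b \<cdot>\<^sub>v y j)
        = (A ^\<^sub>m j * B ^\<^sub>m i) *\<^sub>v (B *\<^sub>v y j) - b \<cdot>\<^sub>v ((A ^\<^sub>m j * B ^\<^sub>m i) *\<^sub>v y j)"
      using mult_minus_distrib_mat_vec[OF AB _ _, of "B *\<^sub>v y j" "b \<cdot>\<^sub>v y j"] mult_mat_vec[OF AB yj] B yj
      by simp
    also have "(A ^\<^sub>m j * B ^\<^sub>m i) *\<^sub>v (B *\<^sub>v y j) = (A ^\<^sub>m j * B ^\<^sub>m Suc i) *\<^sub>v y j"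
      using assoc_mult_mat_vec[OF AB B yj] assoc_mult_mat[OF pow_carrier_mat[OF A] pow_carrier_mat[OF B] B]
      by simp
    finally show ?thesis using q AB yj A B by simp
  qed
  thus ?thesis unfolding mixed_power_sum_def by (simp add: sum_subtractf sum_distrib_left)
qed

text \<open>Applying the linear factors of the split characteristic polynomial of B to all members of the
  family lowers the number of vanishing mixed power sums by one per factor; just before the family
  vanishes it consists of eigenvectors for a common eigenvalue.\<close>

lemma family_to_eigen_family:
  fixes A B :: "'a :: field mat"
  assumes A: "A \<in> carrier_mat n n" and B: "B \<in> carrier_mat n n" and spB: "char_poly_splits B"
    and y: "\<forall>j<n. y j \<in> carrier_vec n" "\<exists>j<n. y j \<noteq> 0\<^sub>v n"
    and y_sum: "\<forall>i<n. \<forall>q<n. mixed_power_sum n A B y i q = 0"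
  shows "\<exists>z b. (\<forall>j<n. z j \<in> carrier_vec n \<and> B *\<^sub>v z j = b \<cdot>\<^sub>v z j) \<and> (\<exists>j<n. z j \<noteq> 0\<^sub>v n)
     \<and> (\<forall>q<n. (\<Sum>j<n. (A ^\<^sub>m j *\<^sub>v z j) $ q) = 0)"
proof -
  obtain bs where bs: "length bs = n" "\<forall>x \<in> carrier_vec n. apply_factors B bs x = 0\<^sub>v n"
    using spB split_char_poly_annihilator[OF B] unfolding char_poly_splits_def by blast
  define f where "f m j = apply_factors B (take m bs) (y j)" for m j
  have f: "f m j \<in> carrier_vec n" if "j < n" for m j unfolding f_def using B y(1) that by simp
  have f_Suc: "f (Suc m) = (\<lambda>j. B *\<^sub>v f m j - bs ! m \<cdot>\<^sub>v f m j)" if "m < n" for m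
    unfolding f_def using apply_factors_take_Suc[of m bs B] that bs(1) by auto
  have f_sum: "\<forall>i < n - m. \<forall>q<n. mixed_power_sum n A B (f m) i q = 0" if "m \<le> n" for m
    using that
  proof (induct m)
    case 0
    thus ?case using y_sum unfolding f_def by simp
  next
    case (Suc m)
    thus ?case using mixed_power_sum_step[OF A B f] f_Suc[of m] by simp
  qed
  let ?zero = "\<lambda>m. \<forall>j<n. f m j = 0\<^sub>v n"
  have "?zero n" "\<not> ?zero 0" unfolding f_def using bs y by auto
  then obtain m where m: "m < n" "\<not> ?zero m" "?zero (Suc m)"
    using ex_least_nat_less[of ?zero n] by blast
  have eig: "B *\<^sub>v f m j = bs ! m \<cdot>\<^sub>v f m j" if "j < n" for j
    by (rule vec_eq_of_minus_eq_zero[of _ n]) (use that f B f_Suc[OF m(1)] m(3) in auto)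
  have "(\<Sum>j<n. (A ^\<^sub>m j *\<^sub>v f m j) $ q) = 0" if "q < n" for q
  proof -
    have "mixed_power_sum n A B (f m) 0 q = 0" using f_sum[of m] m(1) that by simp
    moreover have "mixed_power_sum n A B (f m) 0 q = (\<Sum>j<n. (A ^\<^sub>m j *\<^sub>v f m j) $ q)"
      unfolding mixed_power_sum_def by (rule sum.cong) (use A B in simp_all)
    ultimately show ?thesis by simp
  qed
  thus ?thesis using f eig m(2) by blast
qed

lemma eigenvector_lincomb:
  fixes B :: "'a :: field mat"
  assumes B: "B \<in> carrier_mat n n" and x: "x \<in> carrier_vec n" and y: "y \<in> carrier_vec n"
    and Bx: "B *\<^sub>v x = b \<cdot>\<^sub>v x" and By: "B *\<^sub>v y = b \<cdot>\<^sub>v y"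
  shows "B *\<^sub>v (p \<cdot>\<^sub>v x - s \<cdot>\<^sub>v y) = b \<cdot>\<^sub>v (p \<cdot>\<^sub>v x - s \<cdot>\<^sub>v y)"
proof -
  have "B *\<^sub>v (p \<cdot>\<^sub>v x - s \<cdot>\<^sub>v y) = p \<cdot>\<^sub>v (B *\<^sub>v x) - s \<cdot>\<^sub>v (B *\<^sub>v y)"
    using B x y by (simp add: mult_minus_distrib_mat_vec mult_mat_vec)
  thus ?thesis unfolding Bx By using x y by (auto simp: vec_eq_iff algebra_simps)
qed

lemma collinear_family_imp_singular_krylov:
  fixes A :: "'a :: field mat"
  assumes A: "A \<in> carrier_mat n n" and z: "\<forall>j<n. z j \<in> carrier_vec n" and j0: "j0 < n"
    and uv: "u \<bullet> z j0 \<noteq> 0" and col: "\<forall>j<n. (u \<bullet> z j0) \<cdot>\<^sub>v z j - (u \<bullet> z j) \<cdot>\<^sub>v z j0 = 0\<^sub>v n"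
    and z_sum: "\<forall>q<n. (\<Sum>j<n. (A ^\<^sub>m j *\<^sub>v z j) $ q) = 0"
  shows "det (krylov_mat n A (z j0)) = 0"
proof -
  define v where "v = z j0"
  have v: "v \<in> carrier_vec n" using z j0 unfolding v_def by auto
  define c where "c = vec n (\<lambda>j. (u \<bullet> z j) / (u \<bullet> v))"
  have c: "c \<in> carrier_vec n" "c \<noteq> 0\<^sub>v n"
    using j0 uv unfolding c_def v_def by (auto simp: vec_eq_iff)
  have zc: "z j = c $ j \<cdot>\<^sub>v v" if j: "j < n" for j
  proof (rule eq_vecI)
    fix i assume "i < dim_vec (c $ j \<cdot>\<^sub>v v)"
    hence i: "i < n" using v by simp
    have zj: "z j \<in> carrier_vec n" using z j by simp
    have "((u \<bullet> v) \<cdot>\<^sub>v z j - (u \<bullet> z j) \<cdot>\<^sub>v v) $ i = 0" using col j i unfolding v_def by simp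
    hence "(u \<bullet> v) * z j $ i = (u \<bullet> z j) * v $ i" using zj v i by simp
    thus "z j $ i = (c $ j \<cdot>\<^sub>v v) $ i" using uv j i v unfolding c_def v_def by (simp add: field_simps)
  qed (use z j v in auto)
  have "krylov_mat n A v *\<^sub>v c = 0\<^sub>v n"
  proof (rule eq_vecI)
    fix q assume "q < dim_vec (0\<^sub>v n :: 'a vec)"
    hence q: "q < n" by simp
    have "(krylov_mat n A v *\<^sub>v c) $ q = (\<Sum>j<n. (A ^\<^sub>m j *\<^sub>v z j) $ q)"
      unfolding krylov_mat_mult_vec[OF c(1) q]
      by (rule sum.cong) (use zc q A v in \<open>auto simp: mult_mat_vec\<close>)
    thus "(krylov_mat n A v *\<^sub>v c) $ q = 0\<^sub>v n $ q" using z_sum q by simp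
  qed simp
  thus ?thesis using det_0_iff_vec_prod_zero[of "krylov_mat n A v" n] c unfolding v_def by auto
qed

text \<open>A family of eigenvectors z_j of B for a common eigenvalue with sum of A^j z_j zero contains, up to
  linear combination, an eigenvector orthogonal to a given eigen-covector u of A, unless all z_j are
  multiples of one vector v; in that case the family is a relation among the Krylov vectors of v.\<close>

lemma eigen_family_imp_eigen_perp:
  fixes A B :: "'a :: field mat"
  assumes A: "A \<in> carrier_mat n n" and B: "B \<in> carrier_mat n n" and n: "n \<ge> 1"
    and spA: "char_poly_splits A"
    and z: "\<forall>j<n. z j \<in> carrier_vec n \<and> B *\<^sub>v z j = b \<cdot>\<^sub>v z j" "\<exists>j<n. z j \<noteq> 0\<^sub>v n"
    and z_sum: "\<forall>q<n. (\<Sum>j<n. (A ^\<^sub>m j *\<^sub>v z j) $ q) = 0"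
  shows "eigen_perp A B"
proof -
  obtain u g where u: "eigenvector A\<^sup>T u g" using eigenvector_transpose_exists[OF A n spA] by blast
  have uc: "u \<in> carrier_vec n" using u A unfolding eigenvector_def by auto
  have eig: "eigenvector B x b" if "x \<in> carrier_vec n" "x \<noteq> 0\<^sub>v n" "B *\<^sub>v x = b \<cdot>\<^sub>v x" for x
    using that B unfolding eigenvector_def by simp
  obtain j0 where j0: "j0 < n" "z j0 \<noteq> 0\<^sub>v n" using z(2) by blast
  define v where "v = z j0"
  have v: "v \<in> carrier_vec n" "B *\<^sub>v v = b \<cdot>\<^sub>v v" using z(1) j0 unfolding v_def by auto
  consider (orth) j where "j < n" "z j \<noteq> 0\<^sub>v n" "u \<bullet> z j = 0"
    | (comb) j where "j < n" "u \<bullet> v \<noteq> 0" "(u \<bullet> v) \<cdot>\<^sub>v z j - (u \<bullet> z j) \<cdot>\<^sub>v v \<noteq> 0\<^sub>v n"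
    | (collinear) "u \<bullet> v \<noteq> 0" "\<forall>j<n. (u \<bullet> v) \<cdot>\<^sub>v z j - (u \<bullet> z j) \<cdot>\<^sub>v v = 0\<^sub>v n"
    using j0 unfolding v_def by blast
  thus ?thesis
  proof cases
    case orth
    thus ?thesis unfolding eigen_perp_def using u eig z(1) by blast
  next
    case (comb j)
    define d where "d = (u \<bullet> v) \<cdot>\<^sub>v z j - (u \<bullet> z j) \<cdot>\<^sub>v v"
    have zj: "z j \<in> carrier_vec n" "B *\<^sub>v z j = b \<cdot>\<^sub>v z j" using z(1) comb(1) by auto
    have "B *\<^sub>v d = b \<cdot>\<^sub>v d" unfolding d_def by (rule eigenvector_lincomb[OF B zj(1) v(1) zj(2) v(2)])
    moreover have "u \<bullet> d = 0" unfolding d_def using uc zj v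
      by (simp add: scalar_prod_minus_distrib[of _ n] ac_simps)
    ultimately show ?thesis unfolding eigen_perp_def using u eig[of d] comb(3) zj v
      unfolding d_def by auto
  next
    case collinear
    hence "det (krylov_mat n A v) = 0"
      using collinear_family_imp_singular_krylov[OF A _ j0(1)] z z_sum unfolding v_def by blast
    hence "krylov_perp n A B"
      using singular_krylov_imp_orthogonal[OF A v(1)] eig[OF v(1) _ v(2)] j0
      unfolding krylov_perp_def v_def by blast
    thus ?thesis using krylov_perp_imp_eigen_perp[OF A B spA] by blast
  qed
qed

lemma triangulant_zero_imp_eigen_perp:
  fixes A B :: "'a :: field mat"
  assumes A: "A \<in> carrier_mat n n" and B: "B \<in> carrier_mat n n" and n: "n \<ge> 1"
    and spA: "char_poly_splits A" and spB: "char_poly_splits B" and T: "triangulant n A B = 0"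
  shows "eigen_perp A B"
proof -
  obtain y where "\<forall>j<n. y j \<in> carrier_vec n" "\<exists>j<n. y j \<noteq> 0\<^sub>v n"
    "\<forall>i<n. \<forall>q<n. mixed_power_sum n A B y i q = 0"
    using triangulant_zero_imp_family[OF A B T] by blast
  from family_to_eigen_family[OF A B spB this] obtain z b where
    "\<forall>j<n. z j \<in> carrier_vec n \<and> B *\<^sub>v z j = b \<cdot>\<^sub>v z j" "\<exists>j<n. z j \<noteq> 0\<^sub>v n"
    "\<forall>q<n. (\<Sum>j<n. (A ^\<^sub>m j *\<^sub>v z j) $ q) = 0" by blast
  from eigen_family_imp_eigen_perp[OF A B n spA this] show ?thesis .
qed

section \<open>Triangularization and the main theorem\<close>

lemma krylov_perp_imp_triangulant_zero:
  fixes A B :: "'a :: field mat"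
  assumes A: "A \<in> carrier_mat n n" and B: "B \<in> carrier_mat n n" and "krylov_perp n A B"
  shows "triangulant n A B = 0"
proof -
  obtain v l w where v: "eigenvector B v l" and w: "w \<in> carrier_vec n" "w \<noteq> 0\<^sub>v n"
    "\<forall>i. w \<bullet> (A ^\<^sub>m i *\<^sub>v v) = 0" using assms(3) unfolding krylov_perp_def by blast
  have "v \<in> carrier_vec n" using v B unfolding eigenvector_def by auto
  from krylov_perp_imp_singular[OF A this w] show ?thesis
    using singular_krylov_imp_triangulant_zero[OF A B v] by blast
qed

lemma det_last_row_replaced:
  fixes c :: "'a :: field vec"
  assumes n: "n \<ge> 1"
  shows "det (mat n n (\<lambda>(i, j). if i = n - 1 then c $ j else if i = j then 1 else 0)) = c $ (n - 1)"
proof -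
  define S where "S = mat n n (\<lambda>(i, j). if i = n - 1 then c $ j else if i = j then (1 :: 'a) else 0)"
  have S: "S \<in> carrier_mat n n" unfolding S_def by simp
  have "upper_triangular S\<^sup>T" unfolding S_def by (rule upper_triangularI) auto
  hence "det S = prod_list (diag_mat S\<^sup>T)"
    using det_transpose[OF S] det_upper_triangular[of "S\<^sup>T" n] S by simp
  also have "diag_mat S\<^sup>T = map (\<lambda>i. if i = n - 1 then c $ (n - 1) else 1) [0..<n]"
    unfolding diag_mat_def S_def by (rule map_cong) auto
  also have "[0..<n] = [0..<n - 1] @ [n - 1]" using n by (cases n) auto
  also have "map (\<lambda>i. if i = n - 1 then c $ (n - 1) else 1) ([0..<n - 1] @ [n - 1])
      = replicate (n - 1) 1 @ [c $ (n - 1)]" by (simp, rule nth_equalityI) auto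
  finally show ?thesis unfolding S_def by simp
qed

lemma transpose_mult_vec_index:
  fixes Q :: "'a :: comm_ring_1 mat"
  assumes "Q \<in> carrier_mat nr nc" and "w \<in> carrier_vec nr" and "k < nc"
  shows "(Q\<^sup>T *\<^sub>v w) $ k = w \<bullet> col Q k"
  using assms comm_scalar_prod[of "col Q k" nr w] by simp

lemma exists_inverse_pair_first_col_pairing:
  fixes v w :: "'a :: field vec"
  assumes v: "v \<in> carrier_vec n" "v \<noteq> 0\<^sub>v n" and w: "w \<in> carrier_vec n" "w \<noteq> 0\<^sub>v n"
    and wv: "w \<bullet> v = 0" and n: "n \<ge> 2"
  shows "\<exists>Q Qi. Q \<in> carrier_mat n n \<and> Qi \<in> carrier_mat n n \<and> Q * Qi = 1\<^sub>m n \<and> Qi * Q = 1\<^sub>m n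
     \<and> col Q 0 = v \<and> w \<bullet> col Q (n - 1) \<noteq> 0"
proof -
  obtain Q Qi where Q: "Q \<in> carrier_mat n n" "Qi \<in> carrier_mat n n" "Q * Qi = 1\<^sub>m n"
    "Qi * Q = 1\<^sub>m n" "col Q 0 = v" using exists_inverse_pair_first_col[OF v] by blast
  have "\<exists>k<n. w \<bullet> col Q k \<noteq> 0"
  proof (rule ccontr)
    assume "\<not> (\<exists>k<n. w \<bullet> col Q k \<noteq> 0)"
    hence Qw: "Q\<^sup>T *\<^sub>v w = 0\<^sub>v n"
      using Q(1) transpose_mult_vec_index[OF Q(1) w(1)] by (auto simp: vec_eq_iff)
    have "Qi\<^sup>T * Q\<^sup>T = 1\<^sub>m n" using transpose_mult[OF Q(1,2), symmetric] Q(3) by simp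
    hence "w = (Qi\<^sup>T * Q\<^sup>T) *\<^sub>v w" using w(1) by simp
    also have "\<dots> = Qi\<^sup>T *\<^sub>v (Q\<^sup>T *\<^sub>v w)" by (rule assoc_mult_mat_vec) (use Q w in auto)
    also have "\<dots> = 0\<^sub>v n" unfolding Qw using Q(2) by (intro eq_vecI) auto
    finally show False using w(2) by simp
  qed
  then obtain k where k: "k < n" "w \<bullet> col Q k \<noteq> 0" by blast
  have "k \<noteq> 0"
  proof
    assume "k = 0"
    thus False using k(2) wv Q(5) by simp
  qed
  \<comment> \<open>swapping columns k and n - 1 keeps the first column\<close>
  define S where "S = (swaprows_mat n k (n - 1) :: 'a mat)"
  have S: "S \<in> carrier_mat n n" "S * S = 1\<^sub>m n"
    unfolding S_def using swaprows_mat_inv[OF k(1), of "n - 1"] n by auto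
  have "col S 0 = unit_vec n 0"
    unfolding S_def using \<open>k \<noteq> 0\<close> n k(1) by (intro eq_vecI) auto
  hence "col (Q * S) 0 = v"
    using col_mult2[OF Q(1) S(1), of 0] mult_unit_vec_eq_col[OF Q(1), of 0] Q(5) n by simp
  moreover have "col S (n - 1) = unit_vec n k"
    unfolding S_def using \<open>k \<noteq> 0\<close> n k(1) by (intro eq_vecI) auto
  hence "col (Q * S) (n - 1) = col Q k"
    using col_mult2[OF Q(1) S(1), of "n - 1"] mult_unit_vec_eq_col[OF Q(1) k(1)] n by simp
  moreover have "(Q * S) * (S * Qi) = 1\<^sub>m n"
    by (rule mult_inverse_pair[OF Q(1,2) S(1,1) Q(3) S(2)])
  moreover have "(S * Qi) * (Q * S) = 1\<^sub>m n"
    by (rule mult_inverse_pair[OF S(1,1) Q(2,1) S(2) Q(4)])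
  moreover have "Q * S \<in> carrier_mat n n" "S * Qi \<in> carrier_mat n n" using Q S by auto
  ultimately show ?thesis using k(2) by metis
qed

lemma exists_inverse_pair_first_col_last_row:
  fixes v w :: "'a :: field vec"
  assumes v: "v \<in> carrier_vec n" "v \<noteq> 0\<^sub>v n" and w: "w \<in> carrier_vec n" "w \<noteq> 0\<^sub>v n"
    and wv: "w \<bullet> v = 0" and n: "n \<ge> 2"
  shows "\<exists>P Pi. P \<in> carrier_mat n n \<and> Pi \<in> carrier_mat n n \<and> P * Pi = 1\<^sub>m n \<and> Pi * P = 1\<^sub>m n
     \<and> col P 0 = v \<and> row Pi (n - 1) = w"
proof -
  obtain Q Qi where Q: "Q \<in> carrier_mat n n" "Qi \<in> carrier_mat n n" "Q * Qi = 1\<^sub>m n"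
    "Qi * Q = 1\<^sub>m n" "col Q 0 = v" "w \<bullet> col Q (n - 1) \<noteq> 0"
    using exists_inverse_pair_first_col_pairing[OF v w wv n] by blast
  define w' where "w' = Q\<^sup>T *\<^sub>v w"
  have w': "w' \<in> carrier_vec n" "w' $ 0 = 0" "w' $ (n - 1) \<noteq> 0"
    unfolding w'_def using Q w wv n transpose_mult_vec_index[OF Q(1) w(1)] by auto
  \<comment> \<open>replacing the last row of the identity by w' fixes e_0 and is invertible\<close>
  define S where "S = mat n n (\<lambda>(i, j). if i = n - 1 then w' $ j else if i = j then (1 :: 'a) else 0)"
  have S: "S \<in> carrier_mat n n" unfolding S_def by simp
  have "det S = w' $ (n - 1)" unfolding S_def by (rule det_last_row_replaced) (use n in simp)
  then obtain Si where Si: "Si \<in> carrier_mat n n" "S * Si = 1\<^sub>m n" "Si * S = 1\<^sub>m n"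
    using det_nonzero_imp_inverse[OF S] w'(3) by auto
  have "S *\<^sub>v unit_vec n 0 = unit_vec n 0"
    unfolding mult_unit_vec_eq_col[OF S, of 0] using n w'(2) by (auto simp: S_def vec_eq_iff)
  hence "col Si 0 = unit_vec n 0"
    using mult_unit_vec_eq_col[OF Si(1), of 0] assoc_mult_mat_vec[OF Si(1) S, of "unit_vec n 0"] Si(3) n
    by auto
  hence "col (Q * Si) 0 = v" using col_mult2[OF Q(1) Si(1)] mult_unit_vec_eq_col[OF Q(1)] Q(5) n by auto
  moreover have "row (S * Qi) (n - 1) = w"
  proof (rule eq_vecI)
    fix j assume "j < dim_vec w"
    hence j: "j < n" using w by simp
    have "row S (n - 1) = w'" using w'(1) n unfolding S_def by (auto simp: vec_eq_iff)
    hence "row (S * Qi) (n - 1) $ j = w' \<bullet> col Qi j" using S Q j n by simp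
    also have "\<dots> = w \<bullet> (Q *\<^sub>v col Qi j)"
      unfolding w'_def by (rule transpose_vec_mult_scalar[OF Q(1) _ w(1)]) (use Q j in simp)
    also have "Q *\<^sub>v col Qi j = unit_vec n j" using col_mult2[OF Q(1,2) j] Q(3) j by simp
    finally show "row (S * Qi) (n - 1) $ j = w $ j" using w j by simp
  qed (use S Q w in simp)
  moreover have "(Q * Si) * (S * Qi) = 1\<^sub>m n" "(S * Qi) * (Q * Si) = 1\<^sub>m n"
    using mult_inverse_pair[OF Q(1,2) Si(1) S Q(3) Si(3)] mult_inverse_pair[OF S Si(1) Q(2,1) Si(2) Q(4)]
    by auto
  ultimately show ?thesis using Q Si S by (intro exI[of _ "Q * Si"] exI[of _ "S * Qi"]) auto
qed

lemma prop_tri_imp_eigen_perp: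
  fixes A B :: "'a :: field mat"
  assumes A: "A \<in> carrier_mat n n" and B: "B \<in> carrier_mat n n" and "prop_tri n A B"
  shows "eigen_perp A B"
proof -
  obtain P Pi A' B' X Y a b where n2: "n \<ge> 2"
    and P: "P \<in> carrier_mat n n" "Pi \<in> carrier_mat n n" "P * Pi = 1\<^sub>m n" "Pi * P = 1\<^sub>m n"
    and blocks: "A' \<in> carrier_mat (n - 1) (n - 1)" "B' \<in> carrier_mat (n - 1) (n - 1)"
      "X \<in> carrier_mat (n - 1) 1" "Y \<in> carrier_mat 1 (n - 1)"
      "Pi * A * P = four_block_mat A' X (0\<^sub>m 1 (n - 1)) (mat 1 1 (\<lambda>_. a))"
      "Pi * B * P = four_block_mat (mat 1 1 (\<lambda>_. b)) Y (0\<^sub>m (n - 1) 1) B'"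
    using assms(3) unfolding prop_tri_def by blast
  have n: "n \<ge> 1" using n2 by simp
  have PAP: "Pi * A * P \<in> carrier_mat n n" and PBP: "Pi * B * P \<in> carrier_mat n n" using A B P by auto
  have "row (Pi * A * P) (n - 1) = a \<cdot>\<^sub>v unit_vec n (n - 1)"
    by (rule iffD1[OF four_block_last_row_iff[OF PAP n]]) (use blocks in blast)
  hence w: "A\<^sup>T *\<^sub>v row Pi (n - 1) = a \<cdot>\<^sub>v row Pi (n - 1)"
    using row_similar_eq_iff[OF A P, of "n - 1" a] n by simp
  have "col (Pi * B * P) 0 = b \<cdot>\<^sub>v unit_vec n 0"
    by (rule iffD1[OF four_block_first_col_iff[OF PBP n]]) (use blocks in blast)
  hence v: "B *\<^sub>v col P 0 = b \<cdot>\<^sub>v col P 0" using col_similar_eq_iff[OF B P, of 0 b] n by simp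
  have dual: "row Pi i \<bullet> col P j = (if i = j then 1 else 0)" if "i < n" "j < n" for i j
  proof -
    have "(Pi * P) $$ (i, j) = row Pi i \<bullet> col P j" using P(1,2) that by simp
    thus ?thesis unfolding P(4) using that by simp
  qed
  have "row Pi (n - 1) \<noteq> 0\<^sub>v n" "col P 0 \<noteq> 0\<^sub>v n"
    using dual[of "n - 1" "n - 1"] dual[of 0 0] P n by auto
  hence "eigenvector A\<^sup>T (row Pi (n - 1)) a" "eigenvector B (col P 0) b"
    using w v A B P unfolding eigenvector_def by auto
  moreover have "row Pi (n - 1) \<bullet> col P 0 = 0" using dual[of "n - 1" 0] n2 by simp
  ultimately show ?thesis unfolding eigen_perp_def by blast
qed

lemma eigen_perp_imp_prop_tri:
  fixes A B :: "'a :: field mat"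
  assumes A: "A \<in> carrier_mat n n" and B: "B \<in> carrier_mat n n" and n: "n \<ge> 1"
    and perp: "eigen_perp A B"
  shows "prop_tri n A B"
proof -
  have n2: "n \<ge> 2" using eigen_perp_dim[OF A B n perp] .
  obtain w k v l where "eigenvector A\<^sup>T w k" "eigenvector B v l" and wv: "w \<bullet> v = 0"
    using perp unfolding eigen_perp_def by blast
  hence w: "w \<in> carrier_vec n" "w \<noteq> 0\<^sub>v n" "A\<^sup>T *\<^sub>v w = k \<cdot>\<^sub>v w"
    and v: "v \<in> carrier_vec n" "v \<noteq> 0\<^sub>v n" "B *\<^sub>v v = l \<cdot>\<^sub>v v"
    using A B unfolding eigenvector_def by auto
  obtain P Pi where P: "P \<in> carrier_mat n n" "Pi \<in> carrier_mat n n" "P * Pi = 1\<^sub>m n" "Pi * P = 1\<^sub>m n"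
    and cr: "col P 0 = v" "row Pi (n - 1) = w"
    using exists_inverse_pair_first_col_last_row[OF v(1,2) w(1,2) wv n2] by blast
  have PAP: "Pi * A * P \<in> carrier_mat n n" and PBP: "Pi * B * P \<in> carrier_mat n n" using A B P by auto
  have "row (Pi * A * P) (n - 1) = k \<cdot>\<^sub>v unit_vec n (n - 1)"
    using row_similar_eq_iff[OF A P, of "n - 1" k] cr w n by simp
  from iffD2[OF four_block_last_row_iff[OF PAP n] this] obtain A' X where
    "A' \<in> carrier_mat (n - 1) (n - 1)" "X \<in> carrier_mat (n - 1) 1"
    "Pi * A * P = four_block_mat A' X (0\<^sub>m 1 (n - 1)) (mat 1 1 (\<lambda>_. k))" by blast
  have "col (Pi * B * P) 0 = l \<cdot>\<^sub>v unit_vec n 0"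
    using col_similar_eq_iff[OF B P, of 0 l] cr v n by simp
  from iffD2[OF four_block_first_col_iff[OF PBP n] this] obtain Y B' where
    "Y \<in> carrier_mat 1 (n - 1)" "B' \<in> carrier_mat (n - 1) (n - 1)"
    "Pi * B * P = four_block_mat (mat 1 1 (\<lambda>_. l)) Y (0\<^sub>m (n - 1) 1) B'" by blast
  with n2 P \<open>A' \<in> _\<close> \<open>X \<in> _\<close> \<open>Pi * A * P = _\<close> show ?thesis
    unfolding prop_tri_def by blast
qed

theorem theorem1:
  fixes A B :: "'a :: field mat" and n :: nat
  assumes "n \<ge> 1" and "A \<in> carrier_mat n n" and "B \<in> carrier_mat n n"
  shows "(prop_perp n A B \<longleftrightarrow> prop_sub n A B)
       \<and> (prop_sub n A B \<longleftrightarrow> prop_tri n A B)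
       \<and> (prop_tri n A B \<longrightarrow> prop_lt n A B)
       \<and> (prop_lt n A B \<longrightarrow> prop_top n A B)
       \<and> (char_poly_splits A \<longrightarrow>
            (prop_perp n A B \<longleftrightarrow> prop_sub n A B) \<and> (prop_sub n A B \<longleftrightarrow> prop_tri n A B)
            \<and> (prop_tri n A B \<longleftrightarrow> prop_lt n A B))
       \<and> (char_poly_splits A \<and> char_poly_splits B \<longrightarrow>
            (prop_perp n A B \<longleftrightarrow> prop_sub n A B) \<and> (prop_sub n A B \<longleftrightarrow> prop_tri n A B)
            \<and> (prop_tri n A B \<longleftrightarrow> prop_lt n A B) \<and> (prop_lt n A B \<longleftrightarrow> prop_top n A B))"
proof -
  note n = assms(1) and A = assms(2) and B = assms(3)
  have perp: "prop_perp n A B \<longleftrightarrow> eigen_perp A B" by (rule prop_perp_iff_eigen_perp[OF A])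
  have sub: "prop_sub n A B \<longleftrightarrow> eigen_perp A B" by (rule prop_sub_iff_eigen_perp[OF A B n])
  have tri: "prop_tri n A B \<longleftrightarrow> eigen_perp A B"
    using prop_tri_imp_eigen_perp[OF A B] eigen_perp_imp_prop_tri[OF A B n] by blast
  have lt: "prop_lt n A B \<longleftrightarrow> krylov_perp n A B" by (rule prop_lt_iff_krylov_perp[OF A B])
  have perp_lt: "eigen_perp A B \<Longrightarrow> krylov_perp n A B" by (rule eigen_perp_imp_krylov_perp[OF A B])
  have lt_top: "krylov_perp n A B \<Longrightarrow> prop_top n A B"
    unfolding prop_top_def by (rule krylov_perp_imp_triangulant_zero[OF A B])
  have lt_perp: "char_poly_splits A \<Longrightarrow> krylov_perp n A B \<Longrightarrow> eigen_perp A B"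
    by (rule krylov_perp_imp_eigen_perp[OF A B])
  have top_perp: "char_poly_splits A \<Longrightarrow> char_poly_splits B \<Longrightarrow> prop_top n A B \<Longrightarrow> eigen_perp A B"
    unfolding prop_top_def by (rule triangulant_zero_imp_eigen_perp[OF A B n])
  show ?thesis unfolding perp sub tri lt using perp_lt lt_top lt_perp top_perp by blast
qed

end
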